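(* Let $k > 1$. Let $G$ be a group, $S \subset G$ a finite set of semigroup generators of $G$, $\Sigma$ a finite alphabet, $L \subseteq \Sigma^*$ a language and $\psi : L \to G$ a bijection such that: (i) for every $s \in S$ there is a function $f_s : \Sigma^* \to \Sigma^*$ computed on a $k$-tape Turing machine in linear time with $\psi(f_s(w)) = \psi(w)s$ for all $w \in L$; and (ii) $\psi$ is quasigeodesic, i.e. there is $C > 0$ such that $|w| \leqslant C(d_S(\psi(w)) + 1)$ for all $w \in L$. Then there is an algorithm which, given a word $g_1 \dots g_n$ with $g_i \in S$, computes the string $w \in L$ with $\psi(w) = g_1 \cdots g_n$ in time $O(n^2)$.
   Context: A $k$-tape Turing machine has $k$ semi-infinite tapes, each with the unmodifiable symbol $\boxplus$ in its leftmost cell (occurring only there); $\boxdot$ is the blank symbol, $\Sigma \cap \{\boxplus,\boxdot\} = \varnothing$, and the tape alphabet contains $\Sigma \cup \{\boxplus,\boxdot\}$. A function $f : \Sigma^* \to \Sigma^*$ is computed on a $k$-tape Turing machine in linear time if there is such a machine and a constant $C>0$ such that for every input $x \in \Sigma^*$ of length $n$, started with first tape $\boxplus x \boxdot^\infty$, the other tapes $\boxplus \boxdot^\infty$, all heads on $\boxplus$, the machine halts in an accepting state in at most $Cn$ steps with the first tape having prefix $\boxplus f(x) \boxdot$ (no restriction on the rest of the first tape or on the other tapes). For $g \in G$, $d_S(g)$ is the length of a shortest word $g_1 \dots g_m$, $g_i \in S$, with $g = g_1 \cdots g_m$ in $G$. *)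

theory Defs
  imports Complex_Main "HOL-Algebra.Group"
begin

datatype 'b tsym = Start | Blank | Sym 'b | Aux nat

record 'b tm =
  tm_k      :: nat
  tm_states :: "nat set"
  tm_aux    :: "nat set"
  tm_start  :: nat
  tm_halt   :: "nat set"
  tm_accept :: "nat set"
  tm_delta  :: "nat \<Rightarrow> 'b tsym list \<Rightarrow> nat \<times> 'b tsym list \<times> int list"

type_synonym 'b tm_config = "nat \<times> (nat \<Rightarrow> 'b tsym) list \<times> nat list"

definition tm_gamma :: "'b set \<Rightarrow> 'b tm \<Rightarrow> 'b tsym set" where
  "tm_gamma B M = {Start, Blank} \<union> Sym ` B \<union> Aux ` tm_aux M"

definition wf_tm :: "nat \<Rightarrow> 'b set \<Rightarrow> 'b tm \<Rightarrow> bool" where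
  "wf_tm k B M \<longleftrightarrow>
     tm_k M = k \<and> k \<ge> 1 \<and> finite B \<and> finite (tm_states M) \<and> finite (tm_aux M) \<and>
     tm_start M \<in> tm_states M \<and> tm_accept M \<subseteq> tm_halt M \<and> tm_halt M \<subseteq> tm_states M \<and>
     (\<forall>q \<in> tm_states M - tm_halt M. \<forall>rs.
        length rs = k \<and> set rs \<subseteq> tm_gamma B M \<longrightarrow>
        (case tm_delta M q rs of (q', ws, ms) \<Rightarrow>
           q' \<in> tm_states M \<and> length ws = k \<and> length ms = k \<and>
           set ws \<subseteq> tm_gamma B M \<and> set ms \<subseteq> {-1, 0, 1} \<and>
           (\<forall>i<k. (ws ! i = Start \<longleftrightarrow> rs ! i = Start) \<and>
                  (rs ! i = Start \<longrightarrow> ms ! i \<noteq> -1))))"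

fun tm_step :: "'b tm \<Rightarrow> 'b tm_config \<Rightarrow> 'b tm_config" where
  "tm_step M (q, ts, hs) =
     (if q \<in> tm_halt M then (q, ts, hs) else
      (let rs = map (\<lambda>i. (ts ! i) (hs ! i)) [0..<tm_k M] in
       case tm_delta M q rs of (q', ws, ms) \<Rightarrow>
         (q', map (\<lambda>i. (ts ! i)(hs ! i := ws ! i)) [0..<tm_k M],
              map (\<lambda>i. nat (int (hs ! i) + ms ! i)) [0..<tm_k M])))"

definition tm_run :: "'b tm \<Rightarrow> 'b tm_config \<Rightarrow> nat \<Rightarrow> 'b tm_config" where
  "tm_run M c t = (tm_step M ^^ t) c"

definition tm_init :: "'b tm \<Rightarrow> 'b list \<Rightarrow> 'b tm_config" where
  "tm_init M x =
     (tm_start M,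
      (\<lambda>i. if i = 0 then Start else if i \<le> length x then Sym (x ! (i - 1)) else Blank)
        # replicate (tm_k M - 1) (\<lambda>i. if i = 0 then Start else Blank),
      replicate (tm_k M) 0)"

definition tape_has_output :: "(nat \<Rightarrow> 'b tsym) \<Rightarrow> 'b list \<Rightarrow> bool" where
  "tape_has_output tp y \<longleftrightarrow>
     tp 0 = Start \<and> (\<forall>i < length y. tp (Suc i) = Sym (y ! i)) \<and> tp (Suc (length y)) = Blank"

definition tm_outputs_within :: "'b tm \<Rightarrow> 'b list \<Rightarrow> 'b list \<Rightarrow> real \<Rightarrow> bool" where
  "tm_outputs_within M x y T \<longleftrightarrow>
     (\<exists>t. real t \<le> T \<and>
        (case tm_run M (tm_init M x) t of (q, ts, hs) \<Rightarrow>
           q \<in> tm_accept M \<and> tape_has_output (hd ts) y))"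

definition linear_time_computable :: "nat \<Rightarrow> ('a::finite list \<Rightarrow> 'a list) \<Rightarrow> bool" where
  "linear_time_computable k f \<longleftrightarrow>
     (\<exists>M C. wf_tm k (UNIV :: 'a set) M \<and> C > 0 \<and>
        (\<forall>x. tm_outputs_within M x (f x) (C * (real (length x) + 1))))"

definition word_prod :: "('g, 'm) monoid_scheme \<Rightarrow> 'g list \<Rightarrow> 'g" where
  "word_prod G ws = foldr (\<lambda>x acc. x \<otimes>\<^bsub>G\<^esub> acc) ws \<one>\<^bsub>G\<^esub>"

definition semigroup_generates :: "('g, 'm) monoid_scheme \<Rightarrow> 'g set \<Rightarrow> bool" where
  "semigroup_generates G S \<longleftrightarrow> S \<subseteq> carrier G \<and>
     (\<forall>g \<in> carrier G. \<exists>ws. ws \<noteq> [] \<and> set ws \<subseteq> S \<and> word_prod G ws = g)"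

definition word_length :: "('g, 'm) monoid_scheme \<Rightarrow> 'g set \<Rightarrow> 'g \<Rightarrow> nat" where
  "word_length G S g = (LEAST m. \<exists>ws. length ws = m \<and> set ws \<subseteq> S \<and> word_prod G ws = g)"

end

theory Submission
  imports Defs
begin

(* The machine keeps two tracks on its first tape: the input g_1 ... g_n, with the letters already
   processed marked, and the current word w_j = f_{g_j} (... (f_{g_1} w_0)), where psi w_0 = 1.
   For each input letter it runs the linear-time machine computing f_{g_j} on the second track, the
   other tapes serving as that machine's work tapes, then erases what the simulation wrote beyond
   the output and rewinds all heads.  Since psi w_j = g_1 ... g_j, the quasigeodesic bound gives
   |w_j| = O(j).  The simulated machine runs for O(|w_j|) steps and writes only where its heads
   have been, so a round costs O(n) steps and the n rounds cost O(n^2). *)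

section \<open>Words over semigroup generators\<close>

lemma word_prod_Nil [simp]: "word_prod G [] = \<one>\<^bsub>G\<^esub>"
  by (simp add: word_prod_def)

lemma word_prod_Cons [simp]: "word_prod G (x # xs) = x \<otimes>\<^bsub>G\<^esub> word_prod G xs"
  by (simp add: word_prod_def)

lemma (in monoid) word_prod_closed: "set xs \<subseteq> carrier G \<Longrightarrow> word_prod G xs \<in> carrier G"
  by (induction xs) auto

lemma word_length_le: "set xs \<subseteq> S \<Longrightarrow> word_length G S (word_prod G xs) \<le> length xs"
  unfolding word_length_def by (rule Least_le) auto

lemma fold_take_Suc: "i < length gs \<Longrightarrow> fold fs (take (Suc i) gs) w = fs (gs ! i) (fold fs (take i gs) w)"
  by (simp add: take_Suc_conv_app_nth)

lemma (in monoid) word_prod_fold: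
  assumes psi: "psi ` L \<subseteq> carrier G" and S: "S \<subseteq> carrier G"
    and fs: "\<forall>s\<in>S. \<forall>w\<in>L. fs s w \<in> L \<and> psi (fs s w) = psi w \<otimes> s"
  shows "w \<in> L \<Longrightarrow> set gs \<subseteq> S \<Longrightarrow> fold fs gs w \<in> L \<and> psi (fold fs gs w) = psi w \<otimes> word_prod G gs"
proof (induction gs arbitrary: w)
  case Nil
  then show ?case using psi by auto
next
  case (Cons g gs)
  have "psi w \<in> carrier G" "g \<in> carrier G" "word_prod G gs \<in> carrier G"
    using Cons.prems psi S word_prod_closed[of gs] by auto
  then show ?case using Cons fs by (auto simp: m_assoc)
qed

lemma length_le_if_quasigeodesic:
  assumes "\<forall>w\<in>L. real (length w) \<le> C * (real (word_length G S (psi w)) + 1)" and "0 \<le> C"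
    and "w \<in> L" and "psi w = word_prod G gs" and "set gs \<subseteq> S"
  shows "length w \<le> nat \<lceil>C\<rceil> * (length gs + 1)"
proof -
  have "real (length w) \<le> C * (real (word_length G S (psi w)) + 1)" using assms(1,3) by blast
  also have "\<dots> \<le> C * (real (length gs) + 1)"
    using word_length_le[OF assms(5), of G] assms(2,4) by (intro mult_left_mono) auto
  also have "\<dots> \<le> real (nat \<lceil>C\<rceil>) * (real (length gs) + 1)"
    by (intro mult_right_mono) (auto simp: real_nat_ceiling_ge)
  finally have "real (length w) \<le> real (nat \<lceil>C\<rceil> * (length gs + 1))" by (simp add: algebra_simps)
  then show ?thesis by (simp only: of_nat_le_iff)
qed

lemma (in monoid) fold_from_unit:
  assumes psi: "psi ` L \<subseteq> carrier G" and S: "S \<subseteq> carrier G"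
    and fs: "\<forall>s\<in>S. \<forall>w\<in>L. fs s w \<in> L \<and> psi (fs s w) = psi w \<otimes> s"
    and w0: "w0 \<in> L" "psi w0 = \<one>" and gs: "set gs \<subseteq> S"
  shows "fold fs gs w0 \<in> L \<and> psi (fold fs gs w0) = word_prod G gs"
proof -
  have "word_prod G gs \<in> carrier G" using gs S word_prod_closed[of gs] by blast
  then show ?thesis using word_prod_fold[OF psi S fs w0(1) gs] w0(2) by simp
qed

lemma (in monoid) fold_length_le:
  assumes psi: "psi ` L \<subseteq> carrier G" and S: "S \<subseteq> carrier G"
    and fs: "\<forall>s\<in>S. \<forall>w\<in>L. fs s w \<in> L \<and> psi (fs s w) = psi w \<otimes> s"
    and w0: "w0 \<in> L" "psi w0 = \<one>"
    and qgeo: "\<forall>w\<in>L. real (length w) \<le> C * (real (word_length G S (psi w)) + 1)" "0 \<le> C"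
    and gs: "set gs \<subseteq> S" and j: "j \<le> length gs"
  shows "length (fold fs (take j gs) w0) \<le> nat \<lceil>C\<rceil> * (j + 1)"
proof -
  have "set (take j gs) \<subseteq> S" using gs set_take_subset[of j gs] by blast
  from fold_from_unit[OF psi S fs w0 this] show ?thesis
    using length_le_if_quasigeodesic[OF qgeo, of "fold fs (take j gs) w0" "take j gs"] j \<open>set (take j gs) \<subseteq> S\<close>
    by (simp add: min_absorb2)
qed

section \<open>Running times of Turing machines\<close>

lemma tm_run_Suc: "tm_run M c (Suc t) = tm_step M (tm_run M c t)"
  by (simp add: tm_run_def)

lemma tm_run_halted:
  assumes "fst (tm_run M c t) \<in> tm_halt M"
  shows "tm_run M c (t + d) = tm_run M c t"
proof (induction d)
  case (Suc d)
  obtain q ts hs where c: "tm_run M c t = (q, ts, hs)" by (metis prod_cases3)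
  have "tm_run M c (t + Suc d) = tm_step M (tm_run M c t)" using Suc by (simp add: tm_run_Suc)
  also have "\<dots> = tm_run M c t" using c assms by simp
  finally show ?case .
qed simp

lemma tm_outputs_within_first_halt:
  assumes "tm_accept M \<subseteq> tm_halt M" and "tm_outputs_within M x y B"
  obtains t where "real t \<le> B" and "fst (tm_run M (tm_init M x) t) \<in> tm_halt M"
    and "\<forall>t'<t. fst (tm_run M (tm_init M x) t') \<notin> tm_halt M"
    and "tape_has_output (hd (fst (snd (tm_run M (tm_init M x) t)))) y"
proof -
  let ?halted = "\<lambda>t. fst (tm_run M (tm_init M x) t) \<in> tm_halt M"
  obtain t0 where t0: "real t0 \<le> B" and acc: "case tm_run M (tm_init M x) t0 of (q, ts, hs) \<Rightarrow>
      q \<in> tm_accept M \<and> tape_has_output (hd ts) y"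
    using assms(2) unfolding tm_outputs_within_def by (elim exE conjE) (rule that; assumption)
  obtain q ts hs where C: "tm_run M (tm_init M x) t0 = (q, ts, hs)" by (metis prod_cases3)
  have "q \<in> tm_accept M" and out: "tape_has_output (hd ts) y" using acc C by simp_all
  then have "?halted t0" using C assms(1) by auto
  define t where "t = (LEAST t. ?halted t)"
  have halted: "?halted t" unfolding t_def by (rule LeastI) (fact \<open>?halted t0\<close>)
  have "t \<le> t0" unfolding t_def by (rule Least_le) (fact \<open>?halted t0\<close>)
  have "\<forall>t'<t. \<not> ?halted t'" unfolding t_def by (auto dest: not_less_Least)
  moreover have "tm_run M (tm_init M x) t = (q, ts, hs)"
    using tm_run_halted[OF halted, of "t0 - t"] \<open>t \<le> t0\<close> C by simp
  ultimately show ?thesis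
    using that[of t] t0 \<open>t \<le> t0\<close> halted out by simp

qed

lemma tm_outputs_within_mono:
  "tm_outputs_within M x y B \<Longrightarrow> B \<le> B' \<Longrightarrow> tm_outputs_within M x y B'"
  unfolding tm_outputs_within_def by (meson order_trans)

lemma linear_time_machines:
  fixes fs :: "'g \<Rightarrow> 'a::finite list \<Rightarrow> 'a list"
  assumes "finite S" and "\<forall>s\<in>S. linear_time_computable k (fs s)"
  obtains Ms and D :: nat where "\<forall>s\<in>S. wf_tm k UNIV (Ms s)"
    and "\<forall>s\<in>S. \<forall>x. tm_outputs_within (Ms s) x (fs s x) (D * (real (length x) + 1))"
proof -
  obtain Ms Cs where MC: "\<forall>s\<in>S. wf_tm k UNIV (Ms s) \<and> Cs s > (0::real) \<and>
      (\<forall>x. tm_outputs_within (Ms s) x (fs s x) (Cs s * (real (length x) + 1)))"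
    using assms(2) unfolding linear_time_computable_def by metis
  define D where "D = nat \<lceil>\<Sum>s\<in>S. Cs s\<rceil>"
  have "Cs s \<le> real D" if "s \<in> S" for s
  proof -
    have "Cs s \<le> (\<Sum>s\<in>S. Cs s)"
      using that assms(1) MC by (intro member_le_sum) (auto intro: less_imp_le)
    then show ?thesis unfolding D_def by linarith
  qed
  then have "\<forall>s\<in>S. \<forall>x. tm_outputs_within (Ms s) x (fs s x) (D * (real (length x) + 1))"
    using MC by (metis tm_outputs_within_mono mult_right_mono of_nat_0_le_iff add_nonneg_nonneg zero_le_one)
  with MC that show ?thesis by blast
qed

lemma round_time_bound:
  fixes i n w P D t1 t k :: nat
  assumes i: "i < n" and w: "w + 1 \<le> P * (n + 1)" and t1: "t1 \<le> D * (w + 1)"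
    and t: "t \<le> 2 * i + 4 + Suc t1 + k * (t1 + 2 * (w + t1) + 6)"
  shows "t \<le> (n + 1) * (5 + D * P + k * (3 * D * P + 2 * P + 6))"
proof -
  define N where "N = n + 1"
  have t1_le: "t1 \<le> D * P * N"
  proof -
    have "D * (w + 1) \<le> D * (P * (n + 1))" using mult_le_mono2[OF w, of D] .
    then show ?thesis using t1 unfolding N_def by (simp only: mult.assoc)
  qed
  have w_le: "w \<le> P * N" using w unfolding N_def by simp
  have scan_le: "2 * i + 5 \<le> 5 * N" using i unfolding N_def by simp
  have tape_le: "t1 + 2 * (w + t1) + 6 \<le> 3 * D * P * N + 2 * P * N + 6 * N"
  proof -
    have "t1 + 2 * (w + t1) + 6 = 3 * t1 + 2 * w + 6" by simp
    also have "\<dots> \<le> 3 * (D * P * N) + 2 * (P * N) + 6 * N" using t1_le w_le unfolding N_def by simp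
    finally show ?thesis by (simp add: mult.assoc)
  qed
  have tapes_le: "k * (t1 + 2 * (w + t1) + 6) \<le> k * (3 * D * P * N + 2 * P * N + 6 * N)"
    using tape_le by (rule mult_le_mono2)
  have "t \<le> 5 * N + D * P * N + k * (3 * D * P * N + 2 * P * N + 6 * N)" using t scan_le t1_le tapes_le by linarith
  also have "\<dots> = N * (5 + D * P + k * (3 * D * P + 2 * P + 6))" by (simp add: algebra_simps)
  finally show ?thesis unfolding N_def .
qed

lemma total_time_bound:
  fixes n w0 A Q tr wn :: nat
  assumes t: "tr \<le> n * ((n + 1) * A)" and wn: "wn \<le> Q * (n + 1)"
  shows "(2 * w0 + 4) + tr + (2 * n + wn + 6) \<le> (2 * w0 + 12 + A + Q) * (n + 1)\<^sup>2"
proof -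
  define N where "N = n + 1"
  have N1: "1 \<le> N" unfolding N_def by simp
  have NN: "N \<le> N\<^sup>2" using N1 by (simp add: power2_eq_square)
  have N2: "1 \<le> N\<^sup>2" using N1 NN by linarith
  have "n * (N * A) \<le> N * (N * A)" unfolding N_def by simp
  then have "tr \<le> A * N\<^sup>2" using t unfolding N_def by (simp add: power2_eq_square algebra_simps)
  moreover have "2 * n + wn + 6 \<le> 6 * N\<^sup>2 + (2 + Q) * N\<^sup>2"
  proof -
    have "2 * n + wn \<le> (2 + Q) * N" using wn unfolding N_def by (simp add: algebra_simps)
    also have "\<dots> \<le> (2 + Q) * N\<^sup>2" using NN by (rule mult_le_mono2)
    finally show ?thesis using N2 by linarith
  qed
  moreover have "2 * w0 + 4 \<le> (2 * w0 + 4) * N\<^sup>2" using N2 by simp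
  ultimately have "(2 * w0 + 4) + tr + (2 * n + wn + 6) \<le> (2 * w0 + 4) * N\<^sup>2 + A * N\<^sup>2 + (6 * N\<^sup>2 + (2 + Q) * N\<^sup>2)"
    by linarith
  also have "\<dots> = (2 * w0 + 12 + A + Q) * N\<^sup>2" by (simp add: algebra_simps)
  finally show ?thesis unfolding N_def .
qed

section \<open>A machine running the given machines one after another\<close>

(* A cell of tape i < k carries two tracks: an input mark (only used on tape 0, where the input
   word is stored) and the symbol seen by the simulated machines; an Unwritten cell reads as a
   blank to them.  Out a is a letter of the final output. *)
datatype 'g input_mark = No_Input | Consumed | Pending 'g
datatype 'a sim_mark = Unwritten | Written "'a tsym"
datatype ('a, 'g) cell = Marker | Cell "'g input_mark" "'a sim_mark" | Out 'a

datatype 'g control =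
    Load nat | Rewind_Scan | Scan | Rewind_Sim 'g | Simulate 'g nat
  | Rewind_Clean nat | Clean nat bool | Rewind_Next nat | Rewind_Output | Output | Accept | Reject

type_synonym ('a, 'g) action = "'g control \<times> (nat \<Rightarrow> ('a, 'g) cell) \<times> (nat \<Rightarrow> int)"
type_synonym ('a, 'g) config = "'g control \<times> (nat \<Rightarrow> nat \<Rightarrow> ('a, 'g) cell) \<times> (nat \<Rightarrow> nat)"

definition write_move :: "'g control \<Rightarrow> nat \<Rightarrow> ('a, 'g) cell \<Rightarrow> int \<Rightarrow> (nat \<Rightarrow> ('a, 'g) cell) \<Rightarrow> ('a, 'g) action"
  where "write_move q j c m rs = (q, rs(j := c), (\<lambda>i. 0)(j := m))"

definition set_state :: "'g control \<Rightarrow> (nat \<Rightarrow> ('a, 'g) cell) \<Rightarrow> ('a, 'g) action"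
  where "set_state q rs = (q, rs, \<lambda>i. 0)"

fun sim_sym :: "('a, 'g) cell \<Rightarrow> 'a tsym" where
  "sim_sym Marker = Start"
| "sim_sym (Cell I Unwritten) = Blank"
| "sim_sym (Cell I (Written s)) = s"
| "sim_sym (Out a) = Blank"

fun input_of :: "('a, 'g) cell \<Rightarrow> 'g input_mark" where
  "input_of (Cell I v) = I"
| "input_of _ = No_Input"

fun mark_of :: "('a, 'g) cell \<Rightarrow> 'a sim_mark" where
  "mark_of (Cell I v) = v"
| "mark_of _ = Unwritten"

fun erase :: "('a, 'g) cell \<Rightarrow> ('a, 'g) cell" where
  "erase (Cell I v) = Cell I Unwritten"
| "erase c = c"

fun publish :: "('a, 'g) cell \<Rightarrow> ('a, 'g) cell" where
  "publish (Cell I (Written (Sym a))) = Out a"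
| "publish c = c"

fun holds_letter :: "('a, 'g) cell \<Rightarrow> bool" where
  "holds_letter (Cell I (Written (Sym a))) = True"
| "holds_letter _ = False"

fun is_written :: "('a, 'g) cell \<Rightarrow> bool" where
  "is_written (Cell I (Written s)) = True"
| "is_written _ = False"

definition final :: "'g control \<Rightarrow> bool" where
  "final q \<longleftrightarrow> q = Accept \<or> q = Reject"

lemma not_final_simps [simp]:
  "\<not> final Scan" "\<not> final Output" "\<not> final (Clean i b)" "\<not> final (Simulate g q)"
  "\<not> final (Rewind_Clean i)" "\<not> final (Rewind_Next i)" "\<not> final Rewind_Output" "\<not> final (Rewind_Sim g)"
  by (auto simp: final_def)

fun encode_cell :: "(('a, 'g) cell \<Rightarrow> nat) \<Rightarrow> ('a, 'g) cell \<Rightarrow> ('a + 'g) tsym" where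
  "encode_cell fc Marker = Start"
| "encode_cell fc (Out a) = Sym (Inl a)"
| "encode_cell fc (Cell No_Input Unwritten) = Blank"
| "encode_cell fc (Cell (Pending g) Unwritten) = Sym (Inr g)"
| "encode_cell fc c = Aux (fc c)"

lemma inj_on_encode_cell: "inj_on fc A \<Longrightarrow> inj_on (encode_cell fc) A"
  unfolding inj_on_def
proof (intro ballI impI)
  fix x y assume "\<forall>x\<in>A. \<forall>y\<in>A. fc x = fc y \<longrightarrow> x = y" "x \<in> A" "y \<in> A" "encode_cell fc x = encode_cell fc y"
  then show "x = y"
    by (cases "(fc, x)" rule: encode_cell.cases; cases "(fc, y)" rule: encode_cell.cases) auto
qed

lemma encode_cell_eq_Start: "encode_cell fc c = Start \<longleftrightarrow> c = Marker"
  by (cases "(fc,c)" rule: encode_cell.cases) auto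

lemma nat_int_Suc [simp]: "nat (int p + 1) = Suc p" "nat (1 + int p) = Suc p" "nat (int (Suc p) - 1) = p"
  by simp_all

locale sequential_sim =
  fixes k :: nat and S :: "'g set" and Ms :: "'g \<Rightarrow> 'a::finite tm" and w0 :: "'a list"
  assumes k_pos: "0 < k" and finite_S: "finite S" and wf_Ms: "\<forall>g\<in>S. wf_tm k UNIV (Ms g)"
begin

definition after_clean :: "nat \<Rightarrow> 'g control" where
  "after_clean i = (if Suc i < k then Rewind_Clean (Suc i) else Scan)"

definition rewind :: "'g control \<Rightarrow> (nat \<times> 'g control) option" where
  "rewind q = (case q of
       Rewind_Scan \<Rightarrow> Some (0, Scan)
     | Rewind_Sim g \<Rightarrow> Some (0, Simulate g (tm_start (Ms g)))
     | Rewind_Clean i \<Rightarrow> Some (i, Clean i (i = 0))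
     | Rewind_Next i \<Rightarrow> Some (i, after_clean i)
     | Rewind_Output \<Rightarrow> Some (0, Output)
     | _ \<Rightarrow> None)"

definition sim_action_ok :: "'g \<Rightarrow> 'a tsym list \<Rightarrow> nat \<times> 'a tsym list \<times> int list \<Rightarrow> bool" where
  "sim_action_ok g rl r = (case r of (q', wl, ml) \<Rightarrow>
      q' \<in> tm_states (Ms g) \<and> length wl = k \<and> length ml = k \<and> set wl \<subseteq> tm_gamma UNIV (Ms g) \<and>
      set ml \<subseteq> {-1, 0, 1} \<and> (\<forall>i<k. (wl ! i = Start \<longleftrightarrow> rl ! i = Start) \<and> (rl ! i = Start \<longrightarrow> ml ! i \<noteq> -1)))"

(* An action of Ms g violating well-formedness leads to Reject; this makes the combined machine
   well formed on all tape contents, not only on reachable ones. *)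
definition simulate_action :: "'g \<Rightarrow> nat \<Rightarrow> (nat \<Rightarrow> ('a, 'g) cell) \<Rightarrow> ('a, 'g) action" where
  "simulate_action g q rs = (let rl = map (\<lambda>i. sim_sym (rs i)) [0..<k] in
     case tm_delta (Ms g) q rl of (q', wl, ml) \<Rightarrow>
     if sim_action_ok g rl (q', wl, ml)
     then (Simulate g q', \<lambda>i. if i < k then (case rs i of Cell I v \<Rightarrow> Cell I (Written (wl ! i)) | c \<Rightarrow> c) else rs i,
           \<lambda>i. if i < k then ml ! i else 0)
     else set_state Reject rs)"

fun delta :: "'g control \<Rightarrow> (nat \<Rightarrow> ('a, 'g) cell) \<Rightarrow> ('a, 'g) action" where
  "delta (Load j) rs = (case rs 0 of
       Marker \<Rightarrow> write_move (Load j) 0 Marker 1 rs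
     | Cell I v \<Rightarrow> if j < length w0 then write_move (Load (Suc j)) 0 (Cell I (Written (Sym (w0!j)))) 1 rs
                  else set_state Rewind_Scan rs
     | Out a \<Rightarrow> set_state Reject rs)"
| "delta Scan rs = (case rs 0 of
       Marker \<Rightarrow> write_move Scan 0 Marker 1 rs
     | Cell Consumed v \<Rightarrow> write_move Scan 0 (Cell Consumed v) 1 rs
     | Cell (Pending g) v \<Rightarrow> write_move (Rewind_Sim g) 0 (Cell Consumed v) 0 rs
     | Cell No_Input v \<Rightarrow> set_state Rewind_Output rs
     | Out a \<Rightarrow> set_state Reject rs)"
| "delta (Simulate g q) rs =
     (if q \<in> tm_halt (Ms g) then set_state (Rewind_Clean 0) rs else simulate_action g q rs)"
| "delta (Clean i keep) rs = (case rs i of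
       Marker \<Rightarrow> write_move (Clean i keep) i Marker 1 rs
     | Cell I v \<Rightarrow>
         if keep then (if holds_letter (Cell I v) then write_move (Clean i True) i (Cell I v) 1 rs
                       else set_state (Clean i False) rs)
         else (if v = Unwritten then set_state (Rewind_Next i) rs
               else write_move (Clean i False) i (Cell I Unwritten) 1 rs)
     | Out a \<Rightarrow> set_state Reject rs)"
| "delta Output rs = (case rs 0 of
       Marker \<Rightarrow> write_move Output 0 Marker 1 rs
     | Cell I v \<Rightarrow> if holds_letter (Cell I v) then write_move Output 0 (publish (Cell I v)) 1 rs
                  else write_move Accept 0 (Cell No_Input Unwritten) 0 rs
     | Out a \<Rightarrow> set_state Reject rs)"
| "delta Accept rs = set_state Accept rs"
| "delta Reject rs = set_state Reject rs"
| "delta q rs = (case rewind q of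
       Some (j, nx) \<Rightarrow> if rs j = Marker then set_state nx rs else write_move q j (rs j) (-1) rs
     | None \<Rightarrow> set_state Reject rs)"

definition scanned :: "(nat \<Rightarrow> nat \<Rightarrow> ('a, 'g) cell) \<Rightarrow> (nat \<Rightarrow> nat) \<Rightarrow> nat \<Rightarrow> ('a, 'g) cell" where
  "scanned T H = (\<lambda>i. if i < k then T i (H i) else Marker)"

fun step :: "('a, 'g) config \<Rightarrow> ('a, 'g) config" where
  "step (q, T, H) = (if final q then (q, T, H) else
     case delta q (scanned T H) of (q', ws, ms) \<Rightarrow>
       (q', \<lambda>i. if i < k then (T i)(H i := ws i) else T i,
            \<lambda>i. if i < k then nat (int (H i) + ms i) else H i))"

definition run :: "nat \<Rightarrow> ('a, 'g) config \<Rightarrow> ('a, 'g) config" where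
  "run t = step ^^ t"

lemma run_0 [simp]: "run 0 c = c"
  by (simp add: run_def)

lemma run_Suc: "run (Suc n) c = run n (step c)"
  by (simp add: run_def funpow_Suc_right del: funpow.simps)

lemma run_Suc': "run (Suc n) c = step (run n c)"
  by (simp add: run_def)

lemma run_1: "run 1 c = step c"
  by (simp add: run_def)

lemma run_add: "run (a + b) c = run b (run a c)"
  by (metis run_def add.commute funpow_add o_apply)

lemma run_seq: "run a c = c' \<Longrightarrow> run b c' = c'' \<Longrightarrow> run (a + b) c = c''"
  by (simp add: run_add)

lemma scanned_nth: "j < k \<Longrightarrow> scanned T H j = T j (H j)"
  by (simp add: scanned_def)

lemma step_write_move:
  assumes "\<not> final q" "j < k" "delta q (scanned T H) = write_move q' j c m (scanned T H)"
    and "T' = T(j := (T j)(H j := c))" "H' = H(j := nat (int (H j) + m))"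
  shows "step (q, T, H) = (q', T', H')"
  using assms by (auto simp: write_move_def scanned_def fun_eq_iff)

lemma step_set_state:
  assumes "\<not> final q" "delta q (scanned T H) = set_state q' (scanned T H)"
  shows "step (q, T, H) = (q', T, H)"
  using assms by (auto simp: set_state_def scanned_def fun_eq_iff)

lemma rewind_not_final: "rewind q = Some x \<Longrightarrow> \<not> final q"
  by (cases q) (auto simp: rewind_def final_def)

lemma delta_rewind: "rewind q = Some (j, nx) \<Longrightarrow>
   delta q rs = (if rs j = Marker then set_state nx rs else write_move q j (rs j) (-1) rs)"
  by (cases q) (auto simp: rewind_def)

lemma rewind_clean: "rewind (Rewind_Clean i) = Some (i, Clean i (i = 0))" by (simp add: rewind_def)

lemma rewind_next: "rewind (Rewind_Next i) = Some (i, after_clean i)" by (simp add: rewind_def)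

lemma delta_Scan: "rs 0 = Marker \<or> (\<exists>v. rs 0 = Cell Consumed v) \<Longrightarrow> delta Scan rs = write_move Scan 0 (rs 0) 1 rs"
  by auto

lemma delta_Output: "rs 0 = Marker \<or> holds_letter (rs 0) \<Longrightarrow> delta Output rs = write_move Output 0 (publish (rs 0)) 1 rs"
  by (cases "rs 0" rule: publish.cases) auto

lemma delta_Clean_keep: "rs i = Marker \<or> holds_letter (rs i) \<Longrightarrow> delta (Clean i True) rs = write_move (Clean i True) i (rs i) 1 rs"
  by (cases "rs i" rule: publish.cases) auto

lemma delta_Clean_erase: "rs i = Marker \<or> is_written (rs i) \<Longrightarrow> delta (Clean i False) rs = write_move (Clean i False) i (erase (rs i)) 1 rs"
  by (cases "rs i" rule: is_written.cases) auto

lemma rewind_run: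
  assumes "rewind q = Some (j, nx)" "j < k" "T j 0 = Marker" "\<forall>p>0. T j p \<noteq> Marker"
  shows "run (Suc (H j)) (q, T, H) = (nx, T, H(j := 0))"
proof (induction "H j" arbitrary: H)
  case 0
  have "step (q, T, H) = (nx, T, H)"
    by (rule step_set_state) (use 0 assms in \<open>simp_all add: delta_rewind scanned_nth rewind_not_final\<close>)
  then show ?case using 0 by (simp add: run_Suc fun_upd_idem)
next
  case (Suc n)
  have "step (q, T, H) = (q, T(j := (T j)(H j := T j (H j))), H(j := nat (int (H j) - 1)))"
    by (rule step_write_move[where c = "T j (H j)" and m = "-1"])
      (use Suc assms in \<open>simp_all add: delta_rewind scanned_nth rewind_not_final\<close>)
  also have "\<dots> = (q, T, H(j := n))"
    by (simp add: Suc(2)[symmetric])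
  finally have "step (q, T, H) = (q, T, H(j := n))" .
  then show ?case using Suc(1)[of "H(j := n)"] Suc(2)[symmetric] by (simp add: run_Suc)
qed

lemma sweep:
  assumes "j < k" "\<not> final q" "\<And>rs. P (rs j) \<Longrightarrow> delta q rs = write_move q j (F (rs j)) 1 rs"
    and "\<forall>x. p \<le> x \<and> x < p + n \<longrightarrow> P (T j x)" "H j = p"
  shows "run n (q, T, H) =
    (q, T(j := \<lambda>x. if p \<le> x \<and> x < p + n then F (T j x) else T j x), H(j := p + n))"
  using assms(4,5)
proof (induction n arbitrary: p T H)
  case 0
  then show ?case by (auto simp: fun_eq_iff)
next
  case (Suc n)
  let ?T = "T(j := (T j)(p := F (T j p)))"
  have "step (q, T, H) = (q, ?T, H(j := Suc p))"
    by (rule step_write_move[where c = "F (T j p)" and m = 1])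
      (use assms(1-3) Suc.prems in \<open>auto simp: scanned_nth\<close>)
  moreover have "run n (q, ?T, H(j := Suc p)) = (q,
      ?T(j := \<lambda>x. if Suc p \<le> x \<and> x < Suc p + n then F (?T j x) else ?T j x), (H(j := Suc p))(j := Suc p + n))"
    by (rule Suc.IH) (use Suc.prems in auto)
  ultimately show ?case by (auto simp: run_Suc fun_eq_iff)
qed

lemma sweep_read:
  assumes "j < k" "\<not> final q" "\<And>rs. P (rs j) \<Longrightarrow> delta q rs = write_move q j (rs j) 1 rs"
    and "\<forall>x. p \<le> x \<and> x < p + n \<longrightarrow> P (T j x)" "H j = p"
  shows "run n (q, T, H) = (q, T, H(j := p + n))"
  using sweep[of j q P "\<lambda>c. c" p n T H] assms by simp

definition states :: "'g control set" where
  "states = Load ` {..length w0} \<union> {Rewind_Scan, Scan, Rewind_Output, Output, Accept, Reject}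
     \<union> Rewind_Sim ` S \<union> (\<Union>g\<in>S. Simulate g ` tm_states (Ms g))
     \<union> Rewind_Clean ` {..<k} \<union> (\<lambda>(i, keep). Clean i keep) ` ({..<k} \<times> UNIV) \<union> Rewind_Next ` {..<k}"

definition sim_syms :: "'a tsym set" where
  "sim_syms = {Start, Blank} \<union> range Sym \<union> (\<Union>g\<in>S. tm_gamma UNIV (Ms g))"

definition input_marks :: "'g input_mark set" where
  "input_marks = {No_Input, Consumed} \<union> Pending ` S"

definition sim_marks :: "'a sim_mark set" where
  "sim_marks = insert Unwritten (Written ` sim_syms)"

definition cells :: "('a, 'g) cell set" where
  "cells = {Marker} \<union> range Out \<union> (\<lambda>(I, v). Cell I v) ` (input_marks \<times> sim_marks)"

lemma finite_states: "finite states"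
proof -
  have "\<forall>g\<in>S. finite (tm_states (Ms g))" using wf_Ms by (auto simp: wf_tm_def)
  then show ?thesis unfolding states_def using finite_S by auto
qed

lemma finite_cells: "finite cells"
proof -
  have "\<forall>g\<in>S. finite (tm_gamma UNIV (Ms g))" using wf_Ms by (auto simp: wf_tm_def tm_gamma_def)
  then have "finite sim_syms" unfolding sim_syms_def using finite_S by auto
  then show ?thesis unfolding cells_def sim_marks_def input_marks_def using finite_S by auto
qed

lemma states_simps [simp]:
  "Load j \<in> states \<longleftrightarrow> j \<le> length w0" "Rewind_Scan \<in> states" "Scan \<in> states"
  "Rewind_Output \<in> states" "Output \<in> states" "Accept \<in> states" "Reject \<in> states"
  "Rewind_Sim g \<in> states \<longleftrightarrow> g \<in> S" "Simulate g q \<in> states \<longleftrightarrow> g \<in> S \<and> q \<in> tm_states (Ms g)"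
  "Rewind_Clean i \<in> states \<longleftrightarrow> i < k" "Clean i keep \<in> states \<longleftrightarrow> i < k" "Rewind_Next i \<in> states \<longleftrightarrow> i < k"
  by (auto simp: states_def)

lemma cells_simps [simp]:
  "Marker \<in> cells" "Out a \<in> cells" "Cell I v \<in> cells \<longleftrightarrow> I \<in> input_marks \<and> v \<in> sim_marks"
  by (auto simp: cells_def)

lemma input_marks_simps [simp]:
  "No_Input \<in> input_marks" "Consumed \<in> input_marks" "Pending g \<in> input_marks \<longleftrightarrow> g \<in> S"
  by (auto simp: input_marks_def)

lemma sim_marks_simps [simp]:
  "Unwritten \<in> sim_marks" "Written s \<in> sim_marks \<longleftrightarrow> s \<in> sim_syms"
  by (auto simp: sim_marks_def)

lemma sim_syms_simps [simp]: "Start \<in> sim_syms" "Blank \<in> sim_syms" "Sym a \<in> sim_syms"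
  by (auto simp: sim_syms_def)

lemma sim_syms_tm_gamma: "g \<in> S \<Longrightarrow> s \<in> tm_gamma UNIV (Ms g) \<Longrightarrow> s \<in> sim_syms"
  by (auto simp: sim_syms_def)

definition action_ok :: "(nat \<Rightarrow> ('a, 'g) cell) \<Rightarrow> ('a, 'g) action \<Rightarrow> bool" where
  "action_ok rs r = (case r of (q', ws, ms) \<Rightarrow> q' \<in> states \<and> (\<forall>i<k. ws i \<in> cells \<and> ms i \<in> {-1, 0, 1} \<and>
      (ws i = Marker \<longleftrightarrow> rs i = Marker) \<and> (rs i = Marker \<longrightarrow> ms i \<noteq> -1)))"

lemma action_ok_write_move:
  "q' \<in> states \<Longrightarrow> \<forall>i<k. rs i \<in> cells \<Longrightarrow> c \<in> cells \<Longrightarrow> m \<in> {-1, 0, 1} \<Longrightarrow>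
   (c = Marker \<longleftrightarrow> rs j = Marker) \<Longrightarrow> (rs j = Marker \<longrightarrow> m \<noteq> -1) \<Longrightarrow> action_ok rs (write_move q' j c m rs)"
  by (auto simp: action_ok_def write_move_def)

lemma action_ok_set_state: "q' \<in> states \<Longrightarrow> \<forall>i<k. rs i \<in> cells \<Longrightarrow> action_ok rs (set_state q' rs)"
  by (auto simp: action_ok_def set_state_def)

lemma action_ok_simulate_action:
  assumes g: "g \<in> S" and rs: "\<forall>i<k. rs i \<in> cells"
  shows "action_ok rs (simulate_action g q rs)"
proof -
  define rl where "rl = map (\<lambda>i. sim_sym (rs i)) [0..<k]"
  obtain q' wl ml where d: "tm_delta (Ms g) q rl = (q', wl, ml)"
    by (metis prod_cases3)
  show ?thesis
  proof (cases "sim_action_ok g rl (q', wl, ml)")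
    case True
    then have q': "q' \<in> tm_states (Ms g)" and lengths: "length wl = k" "length ml = k"
      and start: "\<forall>i<k. rs i = Marker \<longrightarrow> ml ! i \<noteq> -1"
      by (auto simp: sim_action_ok_def rl_def)
    have "wl ! i \<in> sim_syms \<and> ml ! i \<in> {-1, 0, 1}" if "i < k" for i
    proof -
      have "wl ! i \<in> set wl" "ml ! i \<in> set ml" using that lengths by simp_all
      then show ?thesis using True g unfolding sim_action_ok_def by (auto intro: sim_syms_tm_gamma)
    qed
    then have "action_ok rs (Simulate g q',
        \<lambda>i. if i < k then (case rs i of Cell I v \<Rightarrow> Cell I (Written (wl ! i)) | c \<Rightarrow> c) else rs i,
        \<lambda>i. if i < k then ml ! i else 0)"
      unfolding action_ok_def using g q' start rs by (auto split: cell.split)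
    then show ?thesis using True d by (simp add: simulate_action_def rl_def)
  next
    case False
    then show ?thesis using d rs by (simp add: simulate_action_def rl_def action_ok_set_state)
  qed
qed

lemma action_ok_rewind:
  "rewind q = Some (j, nx) \<Longrightarrow> q \<in> states \<Longrightarrow> j < k \<Longrightarrow> nx \<in> states \<Longrightarrow> \<forall>i<k. rs i \<in> cells \<Longrightarrow> action_ok rs (delta q rs)"
  by (auto simp: delta_rewind intro!: action_ok_write_move action_ok_set_state)

lemma rewind_in_states: "rewind q = Some (j, nx) \<Longrightarrow> q \<in> states \<Longrightarrow> j < k \<and> nx \<in> states"
  using k_pos wf_Ms by (cases q) (auto simp: rewind_def after_clean_def wf_tm_def)

lemma action_ok_delta:
  assumes q: "q \<in> states" and "\<not> final q" and rs: "\<forall>i<k. rs i \<in> cells"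
  shows "action_ok rs (delta q rs)"
proof (cases "rewind q")
  case (Some r)
  then obtain j nx where "rewind q = Some (j, nx)" by (cases r) auto
  then show ?thesis using q rs rewind_in_states action_ok_rewind by blast
next
  case None
  then show ?thesis
  proof (cases q)
    case (Load j)
    then show ?thesis using q rs k_pos
      by (cases "rs 0") (auto intro!: action_ok_write_move action_ok_set_state)
  next
    case Scan
    then show ?thesis using rs k_pos
      by (cases "rs 0") (auto intro!: action_ok_write_move action_ok_set_state split: input_mark.split)
  next
    case (Simulate g q')
    then show ?thesis using q rs k_pos by (auto intro: action_ok_simulate_action action_ok_set_state)
  next
    case (Clean i keep)
    then show ?thesis using q rs
      by (cases "rs i") (auto intro!: action_ok_write_move action_ok_set_state)
  next
    case Output
    then show ?thesis using rs k_pos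
      by (cases "rs 0") (auto intro!: action_ok_write_move action_ok_set_state elim: holds_letter.elims)
  qed (use \<open>\<not> final q\<close> in \<open>auto simp: final_def rewind_def\<close>)
qed

definition alphabet :: "('a + 'g) set" where
  "alphabet = Inl ` UNIV \<union> Inr ` S"

(* States and cells are coded by the injections qe and fc into nat, the type of states and of
   auxiliary symbols of a tm; the transition function decodes with their inverses. *)
definition machine :: "('g control \<Rightarrow> nat) \<Rightarrow> (('a, 'g) cell \<Rightarrow> nat) \<Rightarrow> ('a + 'g) tm" where
  "machine qe fc = \<lparr>tm_k = k, tm_states = qe ` states, tm_aux = Aux -` (encode_cell fc ` cells),
     tm_start = qe (Load 0), tm_halt = {qe Accept, qe Reject}, tm_accept = {qe Accept},
     tm_delta = \<lambda>qn rl. (case delta (inv_into states qe qn)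
          (\<lambda>i. if i < k then inv_into cells (encode_cell fc) (rl ! i) else Marker) of
        (q', ws, ms) \<Rightarrow> (qe q', map (\<lambda>i. encode_cell fc (ws i)) [0..<k], map ms [0..<k]))\<rparr>"

definition encode :: "('g control \<Rightarrow> nat) \<Rightarrow> (('a, 'g) cell \<Rightarrow> nat) \<Rightarrow> ('a, 'g) config \<Rightarrow> ('a + 'g) tm_config"
  where "encode qe fc c = (case c of (q, T, H) \<Rightarrow> (qe q, map (\<lambda>i. encode_cell fc \<circ> T i) [0..<k], map H [0..<k]))"

definition config_ok :: "('a, 'g) config \<Rightarrow> bool" where
  "config_ok c = (case c of (q, T, H) \<Rightarrow> q \<in> states \<and> (\<forall>i<k. \<forall>p. T i p \<in> cells))"

lemma tm_gamma_machine: "tm_gamma alphabet (machine qe fc) = encode_cell fc ` cells"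
proof (intro equalityI subsetI)
  fix x assume "x \<in> tm_gamma alphabet (machine qe fc)"
  then consider "x = Start" | "x = Blank" | a where "x = Sym (Inl a)" | g where "g \<in> S" "x = Sym (Inr g)"
    | "x \<in> Aux ` (Aux -` (encode_cell fc ` cells))"
    by (auto simp: tm_gamma_def machine_def alphabet_def)
  then show "x \<in> encode_cell fc ` cells"
  proof cases
    case 1
    then show ?thesis by (auto intro!: image_eqI[where x = Marker])
  next
    case 2
    then show ?thesis by (auto intro!: image_eqI[where x = "Cell No_Input Unwritten"])
  next
    case (3 a)
    then show ?thesis by (auto intro!: image_eqI[where x = "Out a"])
  next
    case (4 g)
    then show ?thesis by (auto intro!: image_eqI[where x = "Cell (Pending g) Unwritten"])
  qed auto
next
  fix x assume "x \<in> encode_cell fc ` cells"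
  then obtain c where c: "c \<in> cells" "x = encode_cell fc c" by blast
  show "x \<in> tm_gamma alphabet (machine qe fc)"
  proof (cases x)
    case (Sym b)
    then show ?thesis
      using c by (cases "(fc, c)" rule: encode_cell.cases) (auto simp: tm_gamma_def alphabet_def)
  next
    case (Aux n)
    then have "n \<in> Aux -` (encode_cell fc ` cells)" using c by blast
    then show ?thesis using Aux by (simp add: tm_gamma_def machine_def)
  qed (auto simp: tm_gamma_def)
qed

lemma tm_halt_machine:
  assumes qe: "inj_on qe states" and q: "q \<in> states"
  shows "qe q \<in> tm_halt (machine qe fc) \<longleftrightarrow> final q"
  using inj_onD[OF qe _ q] q by (auto simp: machine_def final_def)

lemma tm_step_encode:
  assumes qe: "inj_on qe states" and fc: "inj_on fc cells" and ok: "config_ok c"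
  shows "config_ok (step c) \<and> tm_step (machine qe fc) (encode qe fc c) = encode qe fc (step c)"
proof -
  obtain q T H where c: "c = (q, T, H)" by (metis prod_cases3)
  have q: "q \<in> states" and T: "\<forall>i<k. \<forall>p. T i p \<in> cells" using ok c by (auto simp: config_ok_def)
  show ?thesis
  proof (cases "final q")
    case True
    then show ?thesis using c ok tm_halt_machine[OF qe q, of fc] by (simp add: encode_def)
  next
    case False
    obtain q' ws ms where d: "delta q (scanned T H) = (q', ws, ms)" by (metis prod_cases3)
    have "\<forall>i<k. scanned T H i \<in> cells" using T by (simp add: scanned_def)
    from action_ok_delta[OF q False this] d have "action_ok (scanned T H) (q', ws, ms)" by simp
    moreover have step: "step c = (q', \<lambda>i. if i < k then (T i)(H i := ws i) else T i,
        \<lambda>i. if i < k then nat (int (H i) + ms i) else H i)"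
      using c False d by simp
    moreover have "(\<lambda>i. if i < k then inv_into cells (encode_cell fc)
        (map (\<lambda>i. (map (\<lambda>i. encode_cell fc \<circ> T i) [0..<k] ! i) (map H [0..<k] ! i)) [0..<k] ! i) else Marker)
      = scanned T H"
      using T inj_on_encode_cell[OF fc] by (auto simp: fun_eq_iff scanned_def)
    ultimately show ?thesis
      using tm_halt_machine[OF qe q, of fc] False T qe q d unfolding c encode_def
      by (auto simp: config_ok_def action_ok_def machine_def Let_def fun_eq_iff)
  qed
qed

lemma tm_run_encode:
  assumes qe: "inj_on qe states" and fc: "inj_on fc cells" and ok: "config_ok c"
  shows "config_ok (run t c) \<and> tm_run (machine qe fc) (encode qe fc c) t = encode qe fc (run t c)"
proof (induction t)
  case 0
  then show ?case using ok by (simp add: tm_run_def)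
next
  case (Suc t)
  then show ?case using tm_step_encode[OF qe fc, of "run t c"] by (simp add: run_Suc' tm_run_def)
qed

lemma wf_tm_machine:
  assumes qe: "inj_on qe states" and fc: "inj_on fc cells"
  shows "wf_tm k alphabet (machine qe fc)"
proof -
  have "case tm_delta (machine qe fc) qn rl of (q', ws, ms) \<Rightarrow>
      q' \<in> tm_states (machine qe fc) \<and> length ws = k \<and> length ms = k \<and>
      set ws \<subseteq> tm_gamma alphabet (machine qe fc) \<and> set ms \<subseteq> {-1, 0, 1} \<and>
      (\<forall>i<k. (ws ! i = Start \<longleftrightarrow> rl ! i = Start) \<and> (rl ! i = Start \<longrightarrow> ms ! i \<noteq> -1))"
    if qn: "qn \<in> tm_states (machine qe fc) - tm_halt (machine qe fc)"
      and rl: "length rl = k" "set rl \<subseteq> tm_gamma alphabet (machine qe fc)" for qn rl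
  proof -
    obtain q where q: "q \<in> states" "qn = qe q" using qn by (auto simp: machine_def)
    have "\<not> final q" using qn q tm_halt_machine[OF qe q(1), of fc] by simp
    define rs where "rs = (\<lambda>i. if i < k then inv_into cells (encode_cell fc) (rl ! i) else Marker)"
    have "\<forall>i<k. rl ! i \<in> encode_cell fc ` cells" using rl tm_gamma_machine[of qe fc] by (auto dest!: nth_mem)
    then have rs_cells: "\<forall>i<k. rs i \<in> cells" and rs_rl: "\<forall>i<k. encode_cell fc (rs i) = rl ! i"
      by (auto simp: rs_def inv_into_into f_inv_into_f)
    obtain q' ws ms where d: "delta q rs = (q', ws, ms)" by (metis prod_cases3)
    have "action_ok rs (q', ws, ms)" using action_ok_delta[OF q(1) \<open>\<not> final q\<close> rs_cells] d by simp
    moreover have "tm_delta (machine qe fc) qn rl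
        = (qe q', map (\<lambda>i. encode_cell fc (ws i)) [0..<k], map ms [0..<k])"
      using qe q d by (simp add: machine_def rs_def[symmetric])
    ultimately show ?thesis using rs_rl tm_gamma_machine[of qe fc]
      by (auto simp: action_ok_def machine_def encode_cell_eq_Start)
  qed
  moreover have "finite (Aux -` (encode_cell fc ` cells))"
    by (rule finite_vimageI) (use finite_cells in \<open>auto simp: inj_def\<close>)
  ultimately show ?thesis
    unfolding wf_tm_def using k_pos finite_S finite_states by (auto simp: machine_def alphabet_def)
qed

definition main_tape :: "'g list \<Rightarrow> nat \<Rightarrow> 'a list \<Rightarrow> nat \<Rightarrow> ('a, 'g) cell" where
  "main_tape gs m w p = (if p = 0 then Marker else
     Cell (if p \<le> m then Consumed else if p \<le> length gs then Pending (gs ! (p - 1)) else No_Input)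
          (if p \<le> length w then Written (Sym (w ! (p - 1))) else Unwritten))"

definition blank_tape :: "nat \<Rightarrow> ('a, 'g) cell" where
  "blank_tape p = (if p = 0 then Marker else Cell No_Input Unwritten)"

definition tapes :: "'g list \<Rightarrow> nat \<Rightarrow> 'a list \<Rightarrow> nat \<Rightarrow> nat \<Rightarrow> ('a, 'g) cell" where
  "tapes gs m w = (\<lambda>i. if i = 0 then main_tape gs m w else blank_tape)"

lemma encode_init: "encode qe fc (Load 0, tapes gs 0 [], \<lambda>i. 0) = tm_init (machine qe fc) (map Inr gs)"
proof -
  have "map (\<lambda>i. encode_cell fc \<circ> tapes gs 0 [] i) [0..<k] =
      (\<lambda>p. if p = 0 then Start else if p \<le> length gs then Sym (Inr (gs ! (p - 1))) else Blank)
        # replicate (k - 1) (\<lambda>p. if p = 0 then Start else Blank)"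
  proof (rule nth_equalityI)
    fix i assume "i < length (map (\<lambda>i. encode_cell fc \<circ> tapes gs 0 [] i) [0..<k])"
    then show "map (\<lambda>i. encode_cell fc \<circ> tapes gs 0 [] i) [0..<k] ! i =
        ((\<lambda>p. if p = 0 then Start else if p \<le> length gs then Sym (Inr (gs ! (p - 1))) else Blank)
          # replicate (k - 1) (\<lambda>p. if p = 0 then Start else Blank)) ! i"
      by (cases i) (auto simp: tapes_def main_tape_def blank_tape_def fun_eq_iff)
  qed (use k_pos in simp)
  then show ?thesis by (simp add: encode_def tm_init_def machine_def map_replicate_const fun_eq_iff)
qed

lemma config_ok_init: "set gs \<subseteq> S \<Longrightarrow> config_ok (Load 0, tapes gs 0 [], \<lambda>i. 0)"
  by (auto simp: config_ok_def tapes_def main_tape_def blank_tape_def)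

lemma tm_outputs_within_machine:
  assumes qe: "inj_on qe states" and fc: "inj_on fc cells" and sg: "set gs \<subseteq> S"
    and r: "run t (Load 0, tapes gs 0 [], \<lambda>i. 0) = (Accept, T, H)"
    and o: "tape_has_output (encode_cell fc \<circ> T 0) y" and tb: "real t \<le> B"
  shows "tm_outputs_within (machine qe fc) (map Inr gs) y B"
proof -
  have "tm_run (machine qe fc) (tm_init (machine qe fc) (map Inr gs)) t = encode qe fc (Accept, T, H)"
    using tm_run_encode[OF qe fc config_ok_init[OF sg], of t] r by (simp add: encode_init)
  then show ?thesis unfolding tm_outputs_within_def using tb o k_pos
    by (intro exI[of _ t]) (auto simp: encode_def machine_def hd_map upt_conv_Cons)
qed

lemma load_write:
  assumes "\<forall>p>0. \<exists>I v. T 0 p = Cell I v" and "H 0 = 1"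
  shows "j \<le> length w0 \<Longrightarrow> run j (Load 0, T, H) = (Load j, T(0 := \<lambda>p. if 0 < p \<and> p \<le> j
     then Cell (input_of (T 0 p)) (Written (Sym (w0 ! (p - 1)))) else T 0 p), H(0 := Suc j))"
proof (induction j)
  case 0
  then show ?case using assms by (auto simp: fun_eq_iff)
next
  case (Suc j)
  obtain I v where cell: "T 0 (Suc j) = Cell I v" using assms(1) by blast
  have "run j (Load 0, T, H) = (Load j, T(0 := \<lambda>p. if 0 < p \<and> p \<le> j
     then Cell (input_of (T 0 p)) (Written (Sym (w0 ! (p - 1)))) else T 0 p), H(0 := Suc j))"
    by (rule Suc.IH) (use Suc.prems in simp)
  then have "run (Suc j) (Load 0, T, H) = step (Load j, T(0 := \<lambda>p. if 0 < p \<and> p \<le> j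
     then Cell (input_of (T 0 p)) (Written (Sym (w0 ! (p - 1)))) else T 0 p), H(0 := Suc j))"
    by (simp only: run_Suc')
  also have "\<dots> = (Load (Suc j), T(0 := \<lambda>p. if 0 < p \<and> p \<le> Suc j
     then Cell (input_of (T 0 p)) (Written (Sym (w0 ! (p - 1)))) else T 0 p), H(0 := Suc (Suc j)))"
    by (rule step_write_move[where j = 0 and c = "Cell I (Written (Sym (w0 ! j)))" and m = 1])
      (use Suc.prems cell k_pos in \<open>auto simp: final_def scanned_nth fun_eq_iff\<close>)
  finally show ?case .
qed

lemma tapes_Cell: "0 < p \<Longrightarrow> \<exists>I v. tapes gs m w i p = Cell I v"
  by (auto simp: tapes_def main_tape_def blank_tape_def)

lemma tapes_0 [simp]: "tapes gs m w i 0 = Marker"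
  by (auto simp: tapes_def main_tape_def blank_tape_def)

lemma tapes_not_Marker: "0 < p \<Longrightarrow> tapes gs m w i p \<noteq> Marker"
  by (auto simp: tapes_def main_tape_def blank_tape_def)

lemma load_phase: "run (2 * length w0 + 4) (Load 0, tapes gs 0 [], \<lambda>i. 0) = (Scan, tapes gs 0 w0, \<lambda>i. 0)"
proof -
  let ?T = "tapes gs 0 [] :: nat \<Rightarrow> nat \<Rightarrow> ('a, 'g) cell" and ?H = "(\<lambda>i. 0)(0 := Suc (length w0))"
  have start: "run 1 (Load 0, ?T, \<lambda>i. 0) = (Load 0, ?T, (\<lambda>i. 0)(0 := 1))"
    unfolding run_1 by (rule step_write_move[where j = 0 and c = Marker and m = 1])
      (use k_pos in \<open>auto simp: final_def scanned_nth fun_eq_iff\<close>)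
  have "?T(0 := \<lambda>p. if 0 < p \<and> p \<le> length w0
      then Cell (input_of (?T 0 p)) (Written (Sym (w0 ! (p - 1)))) else ?T 0 p) = tapes gs 0 w0"
    by (auto simp: fun_eq_iff tapes_def main_tape_def)
  then have loaded: "run (length w0) (Load 0, ?T, (\<lambda>i. 0)(0 := 1)) = (Load (length w0), tapes gs 0 w0, ?H)"
    using load_write[of ?T "(\<lambda>i. 0)(0 := 1)" "length w0"] tapes_Cell by auto
  have stop: "run 1 (Load (length w0), tapes gs 0 w0, ?H) = (Rewind_Scan, tapes gs 0 w0, ?H)"
    unfolding run_1 by (rule step_set_state)
      (use k_pos tapes_Cell[of "Suc (length w0)" gs 0 w0 0] in \<open>auto simp: final_def scanned_nth\<close>)
  have rewind: "run (Suc (Suc (length w0))) (Rewind_Scan, tapes gs 0 w0, ?H) = (Scan, tapes gs 0 w0, \<lambda>i. 0)"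
    using rewind_run[of Rewind_Scan 0 Scan "tapes gs 0 w0" ?H] k_pos tapes_not_Marker by (auto simp: rewind_def)
  have "2 * length w0 + 4 = 1 + length w0 + 1 + Suc (Suc (length w0))" by simp
  then show ?thesis using run_seq[OF run_seq[OF run_seq[OF start loaded] stop] rewind] by (simp only:)
qed

lemma scan_phase:
  assumes m: "m < length gs"
  shows "run (2 * m + 4) (Scan, tapes gs m w, \<lambda>i. 0) =
    (Simulate (gs ! m) (tm_start (Ms (gs ! m))), tapes gs (Suc m) w, \<lambda>i. 0)"
proof -
  let ?T = "tapes gs m w :: nat \<Rightarrow> nat \<Rightarrow> ('a, 'g) cell"
  have "\<forall>x. 0 \<le> x \<and> x < 0 + Suc m \<longrightarrow> ?T 0 x = Marker \<or> (\<exists>v. ?T 0 x = Cell Consumed v)"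
    by (auto simp: tapes_def main_tape_def)
  then have skip: "run (Suc m) (Scan, ?T, \<lambda>i. 0) = (Scan, ?T, (\<lambda>i. 0)(0 := 0 + Suc m))"
    by (intro sweep_read[of 0 Scan "\<lambda>c. c = Marker \<or> (\<exists>v. c = Cell Consumed v)", OF k_pos _ delta_Scan]) auto
  obtain v where v: "?T 0 (Suc m) = Cell (Pending (gs ! m)) v" using m by (auto simp: tapes_def main_tape_def)
  have T': "?T(0 := (?T 0)(Suc m := Cell Consumed v)) = tapes gs (Suc m) w"
    using v by (auto simp: fun_eq_iff tapes_def main_tape_def)
  have consume: "run 1 (Scan, ?T, (\<lambda>i. 0)(0 := 0 + Suc m)) =
      (Rewind_Sim (gs ! m), tapes gs (Suc m) w, (\<lambda>i. 0)(0 := Suc m))"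
    unfolding run_1 by (rule step_write_move[where j = 0 and c = "Cell Consumed v" and m = 0])
      (use k_pos v T' in \<open>auto simp: scanned_nth\<close>)
  have rewind: "run (Suc (Suc m)) (Rewind_Sim (gs ! m), tapes gs (Suc m) w, (\<lambda>i. 0)(0 := Suc m)) =
      (Simulate (gs ! m) (tm_start (Ms (gs ! m))), tapes gs (Suc m) w, \<lambda>i. 0)"
    using rewind_run[of "Rewind_Sim (gs ! m)" 0 _ "tapes gs (Suc m) w" "(\<lambda>i. 0)(0 := Suc m)"]
      k_pos tapes_not_Marker by (auto simp: rewind_def)
  have "2 * m + 4 = Suc m + 1 + Suc (Suc m)" by simp
  then show ?thesis using run_seq[OF run_seq[OF skip consume] rewind] by (simp only:)
qed

lemma output_phase:
  assumes n: "n = length gs"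
  shows "\<exists>T H. run (2 * n + length w + 6) (Scan, tapes gs n w, \<lambda>i. 0) = (Accept, T, H) \<and>
    tape_has_output (encode_cell fc \<circ> T 0) (map Inl w)"
proof -
  let ?T = "tapes gs n w :: nat \<Rightarrow> nat \<Rightarrow> ('a, 'g) cell"
  let ?T' = "?T(0 := \<lambda>x. if 0 \<le> x \<and> x < 0 + Suc (length w) then publish (?T 0 x) else ?T 0 x)"
  have "\<forall>x. 0 \<le> x \<and> x < 0 + Suc n \<longrightarrow> ?T 0 x = Marker \<or> (\<exists>v. ?T 0 x = Cell Consumed v)"
    using n by (auto simp: tapes_def main_tape_def)
  then have "run (Suc n) (Scan, ?T, \<lambda>i. 0) = (Scan, ?T, (\<lambda>i. 0)(0 := 0 + Suc n))"
    by (intro sweep_read[of 0 Scan "\<lambda>c. c = Marker \<or> (\<exists>v. c = Cell Consumed v)", OF k_pos _ delta_Scan]) auto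
  then have skip: "run (Suc n) (Scan, ?T, \<lambda>i. 0) = (Scan, ?T, (\<lambda>i. 0)(0 := Suc n))" by simp
  obtain v where v: "?T 0 (Suc n) = Cell No_Input v" using n by (auto simp: tapes_def main_tape_def)
  have stop: "run 1 (Scan, ?T, (\<lambda>i. 0)(0 := Suc n)) = (Rewind_Output, ?T, (\<lambda>i. 0)(0 := Suc n))"
    unfolding run_1 by (rule step_set_state) (use k_pos v in \<open>auto simp: scanned_nth\<close>)
  have rewind: "run (Suc (Suc n)) (Rewind_Output, ?T, (\<lambda>i. 0)(0 := Suc n)) = (Output, ?T, \<lambda>i. 0)"
    using rewind_run[of Rewind_Output 0 _ ?T "(\<lambda>i. 0)(0 := Suc n)"] k_pos tapes_not_Marker
    by (auto simp: rewind_def)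
  have publish: "run (Suc (length w)) (Output, ?T, \<lambda>i. 0) = (Output, ?T', (\<lambda>i. 0)(0 := 0 + Suc (length w)))"
    by (rule sweep[of 0 Output "\<lambda>c. c = Marker \<or> holds_letter c" publish, OF k_pos _ delta_Output])
      (auto simp: tapes_def main_tape_def)
  obtain I where I: "?T' 0 (Suc (length w)) = Cell I Unwritten" by (auto simp: tapes_def main_tape_def)
  have accept: "run 1 (Output, ?T', (\<lambda>i. 0)(0 := 0 + Suc (length w))) =
      (Accept, ?T'(0 := (?T' 0)(Suc (length w) := Cell No_Input Unwritten)), (\<lambda>i. 0)(0 := Suc (length w)))"
    unfolding run_1 by (rule step_write_move[where j = 0 and c = "Cell No_Input Unwritten" and m = 0])
      (use k_pos I in \<open>auto simp: scanned_nth\<close>)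
  have "2 * n + length w + 6 = Suc n + 1 + Suc (Suc n) + Suc (length w) + 1" by simp
  then have "run (2 * n + length w + 6) (Scan, ?T, \<lambda>i. 0) =
      (Accept, ?T'(0 := (?T' 0)(Suc (length w) := Cell No_Input Unwritten)), (\<lambda>i. 0)(0 := Suc (length w)))"
    using run_seq[OF run_seq[OF run_seq[OF run_seq[OF skip stop] rewind] publish] accept] by (simp only:)
  moreover have "tape_has_output (encode_cell fc \<circ> (?T'(0 := (?T' 0)(Suc (length w) := Cell No_Input Unwritten))) 0)
      (map Inl w)"
    by (auto simp: tape_has_output_def tapes_def main_tape_def)
  ultimately show ?thesis by blast
qed

(* A head writes only where it has been, so the cells written by a simulation form an initial
   segment 1..E of the tape, and erasing them costs O(E) steps. *)
definition written_upto :: "(nat \<Rightarrow> ('a, 'g) cell) \<Rightarrow> (nat \<Rightarrow> 'g input_mark) \<Rightarrow> nat \<Rightarrow> nat \<Rightarrow> bool" where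
  "written_upto tp I E h \<longleftrightarrow> tp 0 = Marker \<and> (\<forall>p>0. \<exists>v. tp p = Cell (I p) v) \<and>
     (\<forall>p>0. mark_of (tp p) = Unwritten \<longleftrightarrow> E < p) \<and> h \<le> E + 1"

lemma written_upto_Marker_iff: "written_upto tp I E h \<Longrightarrow> tp p = Marker \<longleftrightarrow> p = 0"
  unfolding written_upto_def by (metis cell.distinct(1) gr0I)

lemma written_upto_Cell: "written_upto tp I E h \<Longrightarrow> 0 < p \<Longrightarrow> \<exists>v. tp p = Cell (I p) v"
  by (simp add: written_upto_def)

lemma written_upto_beyond: "written_upto tp I E h \<Longrightarrow> E < p \<Longrightarrow> tp p = Cell (I p) Unwritten"
  unfolding written_upto_def by (metis gr0I less_nat_zero_code mark_of.simps(1))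

lemma written_upto_within: "written_upto tp I E h \<Longrightarrow> 0 < p \<Longrightarrow> p \<le> E \<Longrightarrow> is_written (tp p)"
  unfolding written_upto_def by (metis is_written.simps(1) mark_of.simps(1) not_le sim_mark.exhaust)

lemma erase_written_upto:
  assumes "written_upto tp I E h"
  shows "erase (tp p) = (if p = 0 then Marker else Cell (I p) Unwritten)"
proof (cases "p = 0")
  case False
  then obtain v where "tp p = Cell (I p) v" using assms by (auto simp: written_upto_def)
  then show ?thesis using False by simp
qed (use assms in \<open>simp add: written_upto_def\<close>)

lemma erase_and_rewind:
  assumes i: "i < k" and d: "written_upto (T i) I E h" and p: "p \<le> Suc E" and H: "H i = p"
  shows "run (Suc E - p + 1 + Suc (Suc E)) (Clean i False, T, H) =
    (after_clean i, T(i := \<lambda>x. if p \<le> x then erase (T i x) else T i x), H(i := 0))"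
proof -
  let ?T = "T(i := \<lambda>x. if p \<le> x then erase (T i x) else T i x)"
  have marked: "T i x = Marker \<or> is_written (T i x)" if "x < Suc E" for x
    using written_upto_within[OF d, of x] written_upto_Marker_iff[OF d, of x] that by (cases "x = 0") auto
  have "run (Suc E - p) (Clean i False, T, H) =
      (Clean i False, T(i := \<lambda>x. if p \<le> x \<and> x < p + (Suc E - p) then erase (T i x) else T i x),
       H(i := p + (Suc E - p)))"
    by (rule sweep[of i "Clean i False" "\<lambda>c. c = Marker \<or> is_written c" erase, OF i _ delta_Clean_erase])
      (use H p marked in auto)
  also have "\<dots> = (Clean i False, ?T, H(i := Suc E))"
    using p written_upto_beyond[OF d] by (auto simp: fun_eq_iff)
  finally have erase: "run (Suc E - p) (Clean i False, T, H) = (Clean i False, ?T, H(i := Suc E))" .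
  have stop: "run 1 (Clean i False, ?T, H(i := Suc E)) = (Rewind_Next i, ?T, H(i := Suc E))"
    unfolding run_1 by (rule step_set_state) (use i written_upto_beyond[OF d] in \<open>simp_all add: scanned_nth\<close>)
  have "run (Suc (Suc E)) (Rewind_Next i, ?T, H(i := Suc E)) = (after_clean i, ?T, H(i := 0))"
    using rewind_run[of "Rewind_Next i" i "after_clean i" ?T "H(i := Suc E)"] rewind_next i
      written_upto_Marker_iff[OF d] erase_written_upto[OF d] by auto
  with run_seq[OF erase stop] show ?thesis by (rule run_seq)
qed

lemma clean_aux_tape:
  assumes i: "i < k" "i \<noteq> 0" and d: "written_upto (T i) (\<lambda>_. No_Input) E (H i)"
  shows "run (H i + 2 * E + 5) (Rewind_Clean i, T, H) = (after_clean i, T(i := blank_tape), H(i := 0))"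
proof -
  have "run (Suc (H i)) (Rewind_Clean i, T, H) = (Clean i False, T, H(i := 0))"
    using rewind_run[of "Rewind_Clean i" i "Clean i False" T H] rewind_clean i written_upto_Marker_iff[OF d]
    by auto
  moreover have "run (Suc E - 0 + 1 + Suc (Suc E)) (Clean i False, T, H(i := 0)) =
      (after_clean i, T(i := blank_tape), H(i := 0))"
    using erase_and_rewind[where T = T and i = i, OF i(1) d, of 0 "H(i := 0)"] erase_written_upto[OF d]
    by (simp add: blank_tape_def fun_eq_iff)
  ultimately have "run (Suc (H i) + (Suc E - 0 + 1 + Suc (Suc E))) (Rewind_Clean i, T, H) =
      (after_clean i, T(i := blank_tape), H(i := 0))"
    by (simp only: run_add)
  moreover have "H i + 2 * E + 5 = Suc (H i) + (Suc E - 0 + 1 + Suc (Suc E))" by simp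
  ultimately show ?thesis by (simp only:)
qed

lemma clean_main_tape:
  assumes d: "written_upto (T 0) I E (H 0)" and out: "tape_has_output (sim_sym \<circ> T 0) y"
  shows "run (H 0 + 2 * E + 6) (Rewind_Clean 0, T, H) = (after_clean 0, T(0 := \<lambda>p. if p = 0 then Marker
      else Cell (I p) (if p \<le> length y then Written (Sym (y ! (p - 1))) else Unwritten)), H(0 := 0))"
proof -
  have y: "T 0 p = Cell (I p) (Written (Sym (y ! (p - 1))))" if p: "0 < p" "p \<le> length y" for p
  proof -
    obtain v where "T 0 p = Cell (I p) v" using written_upto_Cell[OF d p(1)] by blast
    moreover have "sim_sym (T 0 (Suc (p - 1))) = Sym (y ! (p - 1))"
      using out p unfolding tape_has_output_def by (simp del: Suc_pred)
    ultimately show ?thesis using p(1) by (cases v) auto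
  qed
  have yE: "length y \<le> E"
  proof (rule ccontr)
    assume "\<not> length y \<le> E"
    then show False using y[of "length y"] written_upto_beyond[OF d, of "length y"] by (cases y) auto
  qed
  have rewind: "run (Suc (H 0)) (Rewind_Clean 0, T, H) = (Clean 0 True, T, H(0 := 0))"
    using rewind_run[of "Rewind_Clean 0" 0 "Clean 0 True" T H] rewind_clean k_pos written_upto_Marker_iff[OF d]
    by auto
  have keep: "run (Suc (length y)) (Clean 0 True, T, H(0 := 0)) = (Clean 0 True, T, H(0 := Suc (length y)))"
  proof -
    have "T 0 x = Marker \<or> holds_letter (T 0 x)" if "x < Suc (length y)" for x
      using y[of x] written_upto_Marker_iff[OF d, of 0] that by (cases "x = 0") auto
    then have "run (Suc (length y)) (Clean 0 True, T, H(0 := 0)) =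
        (Clean 0 True, T, (H(0 := 0))(0 := 0 + Suc (length y)))"
      by (intro sweep_read[of 0 "Clean 0 True" "\<lambda>c. c = Marker \<or> holds_letter c", OF k_pos _ delta_Clean_keep])
        auto
    then show ?thesis by simp
  qed
  have stop: "run 1 (Clean 0 True, T, H(0 := Suc (length y))) = (Clean 0 False, T, H(0 := Suc (length y)))"
    unfolding run_1
  proof (rule step_set_state)
    obtain v where "T 0 (Suc (length y)) = Cell (I (Suc (length y))) v"
      using written_upto_Cell[OF d] by blast
    moreover have "sim_sym (T 0 (Suc (length y))) = Blank"
      using out unfolding tape_has_output_def by simp
    ultimately show "delta (Clean 0 True) (scanned T (H(0 := Suc (length y)))) =
        set_state (Clean 0 False) (scanned T (H(0 := Suc (length y))))"
      using k_pos by (cases v) (auto simp: scanned_nth split: tsym.splits)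
  qed simp
  have erase: "run (Suc E - Suc (length y) + 1 + Suc (Suc E)) (Clean 0 False, T, H(0 := Suc (length y))) =
      (after_clean 0, T(0 := \<lambda>x. if Suc (length y) \<le> x then erase (T 0 x) else T 0 x), H(0 := 0))"
    using erase_and_rewind[where T = T and i = 0, OF k_pos d, of "Suc (length y)"] yE by simp
  note run_seq[OF run_seq[OF run_seq[OF rewind keep] stop] erase]
  moreover have "Suc (H 0) + Suc (length y) + 1 + (Suc E - Suc (length y) + 1 + Suc (Suc E)) = H 0 + 2 * E + 6"
    using yE by simp
  moreover have "(\<lambda>x. if Suc (length y) \<le> x then erase (T 0 x) else T 0 x) = (\<lambda>p. if p = 0 then Marker
      else Cell (I p) (if p \<le> length y then Written (Sym (y ! (p - 1))) else Unwritten))"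
    using y written_upto_Marker_iff[OF d] erase_written_upto[OF d] by (auto simp: fun_eq_iff)
  ultimately show ?thesis by (simp only:)
qed

lemma clean_aux_tapes:
  assumes "0 < i" "i < k"
    and "\<forall>j. i \<le> j \<and> j < k \<longrightarrow> (\<exists>E. written_upto (T j) (\<lambda>_. No_Input) E (H j) \<and> E \<le> Em \<and> H j \<le> Hm)"
  shows "\<exists>t \<le> (k - i) * (Hm + 2 * Em + 5). run t (Rewind_Clean i, T, H) =
    (Scan, \<lambda>j. if i \<le> j \<and> j < k then blank_tape else T j, \<lambda>j. if i \<le> j \<and> j < k then 0 else H j)"
  using assms
proof (induction "k - i" arbitrary: i T H)
  case 0
  then show ?case by simp
next
  case (Suc d)
  obtain E where E: "written_upto (T i) (\<lambda>_. No_Input) E (H i)" "E \<le> Em" "H i \<le> Hm"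
    using Suc.prems by blast
  have first: "run (H i + 2 * E + 5) (Rewind_Clean i, T, H) = (after_clean i, T(i := blank_tape), H(i := 0))"
    using clean_aux_tape[of i T E H] Suc.prems E by simp
  show ?case
  proof (cases "Suc i < k")
    case True
    have "\<exists>t \<le> (k - Suc i) * (Hm + 2 * Em + 5). run t (Rewind_Clean (Suc i), T(i := blank_tape), H(i := 0)) =
        (Scan, \<lambda>j. if Suc i \<le> j \<and> j < k then blank_tape else (T(i := blank_tape)) j,
          \<lambda>j. if Suc i \<le> j \<and> j < k then 0 else (H(i := 0)) j)"
      by (rule Suc.hyps(1)) (use Suc.hyps(2) Suc.prems True in auto)
    then obtain t where "t \<le> (k - Suc i) * (Hm + 2 * Em + 5)"
      and "run t (Rewind_Clean (Suc i), T(i := blank_tape), H(i := 0)) =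
        (Scan, \<lambda>j. if Suc i \<le> j \<and> j < k then blank_tape else (T(i := blank_tape)) j,
          \<lambda>j. if Suc i \<le> j \<and> j < k then 0 else (H(i := 0)) j)"
      by blast
    moreover have "k - i = Suc (k - Suc i)" using True by simp
    then have "(k - i) * (Hm + 2 * Em + 5) = (Hm + 2 * Em + 5) + (k - Suc i) * (Hm + 2 * Em + 5)"
      by simp
    ultimately show ?thesis
      using run_seq[OF first] True E Suc.prems
      by (intro exI[of _ "H i + 2 * E + 5 + t"]) (auto simp: after_clean_def fun_eq_iff)
  next
    case False
    then have "after_clean i = Scan" and "k - i = 1" and "\<And>j. (i \<le> j \<and> j < k) \<longleftrightarrow> j = i"
      using Suc.prems by (auto simp: after_clean_def)
    then show ?thesis
      using first E by (intro exI[of _ "H i + 2 * E + 5"]) (auto simp: fun_eq_iff)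
  qed
qed

lemma clean_phase:
  assumes d0: "written_upto (T 0) I E0 (H 0)" "E0 \<le> Em" "H 0 \<le> Hm"
    and out: "tape_has_output (sim_sym \<circ> T 0) y"
    and d: "\<forall>j. 0 < j \<and> j < k \<longrightarrow> (\<exists>E. written_upto (T j) (\<lambda>_. No_Input) E (H j) \<and> E \<le> Em \<and> H j \<le> Hm)"
  shows "\<exists>t \<le> k * (Hm + 2 * Em + 6). run t (Rewind_Clean 0, T, H) =
    (Scan, \<lambda>j. if j = 0 then (\<lambda>p. if p = 0 then Marker
                             else Cell (I p) (if p \<le> length y then Written (Sym (y ! (p - 1))) else Unwritten))
             else if j < k then blank_tape else T j,
     \<lambda>j. if j < k then 0 else H j)"
proof -
  define tp where "tp = (\<lambda>p. if p = 0 then Marker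
    else Cell (I p) (if p \<le> length y then Written (Sym (y ! (p - 1))) else Unwritten))"
  have first: "run (H 0 + 2 * E0 + 6) (Rewind_Clean 0, T, H) = (after_clean 0, T(0 := tp), H(0 := 0))"
    using clean_main_tape[where T = T and H = H, OF d0(1) out] unfolding tp_def .
  show ?thesis
  proof (cases "1 < k")
    case True
    have "\<exists>t \<le> (k - 1) * (Hm + 2 * Em + 5). run t (Rewind_Clean 1, T(0 := tp), H(0 := 0)) =
        (Scan, \<lambda>j. if 1 \<le> j \<and> j < k then blank_tape else (T(0 := tp)) j,
          \<lambda>j. if 1 \<le> j \<and> j < k then 0 else (H(0 := 0)) j)"
      by (rule clean_aux_tapes) (use d True in auto)
    then obtain t where t: "t \<le> (k - 1) * (Hm + 2 * Em + 5)"
      and "run t (Rewind_Clean 1, T(0 := tp), H(0 := 0)) =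
        (Scan, \<lambda>j. if 1 \<le> j \<and> j < k then blank_tape else (T(0 := tp)) j,
          \<lambda>j. if 1 \<le> j \<and> j < k then 0 else (H(0 := 0)) j)"
      by blast
    then have "run (H 0 + 2 * E0 + 6 + t) (Rewind_Clean 0, T, H) =
        (Scan, \<lambda>j. if j = 0 then tp else if j < k then blank_tape else T j, \<lambda>j. if j < k then 0 else H j)"
      using run_seq[OF first] True by (auto simp: after_clean_def fun_eq_iff)
    moreover have "H 0 + 2 * E0 + 6 + t \<le> k * (Hm + 2 * Em + 6)"
    proof -
      have "k * (Hm + 2 * Em + 6) = (Hm + 2 * Em + 6) + (k - 1) * (Hm + 2 * Em + 6)"
        using True by (cases k) auto
      moreover have "(k - 1) * (Hm + 2 * Em + 5) \<le> (k - 1) * (Hm + 2 * Em + 6)" by simp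
      ultimately show ?thesis using t d0 by linarith
    qed
    ultimately show ?thesis unfolding tp_def[symmetric] by blast
  next
    case False
    then have "run (H 0 + 2 * E0 + 6) (Rewind_Clean 0, T, H) =
        (Scan, \<lambda>j. if j = 0 then tp else if j < k then blank_tape else T j, \<lambda>j. if j < k then 0 else H j)"
      using first k_pos by (auto simp: after_clean_def fun_eq_iff)
    moreover have "k = 1" using False k_pos by simp
    then have "H 0 + 2 * E0 + 6 \<le> k * (Hm + 2 * Em + 6)" using d0 by simp
    ultimately show ?thesis unfolding tp_def[symmetric] by blast
  qed
qed

(* A mirrors the configuration C reached by Ms g after t steps, started on the tapes T0, of which
   tape i is written up to cell e0 i. *)
definition simulates :: "'g \<Rightarrow> (nat \<Rightarrow> nat \<Rightarrow> ('a, 'g) cell) \<Rightarrow> (nat \<Rightarrow> nat) \<Rightarrow> nat \<Rightarrow>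
    ('a, 'g) config \<Rightarrow> 'a tm_config \<Rightarrow> bool" where
  "simulates g T0 e0 t A C \<longleftrightarrow> (case A of (q, T, H) \<Rightarrow> case C of (cq, ts, hs) \<Rightarrow>
     q = Simulate g cq \<and> cq \<in> tm_states (Ms g) \<and> length ts = k \<and> length hs = k \<and>
     (\<forall>i<k. ts ! i = sim_sym \<circ> T i \<and> hs ! i = H i) \<and>
     (\<forall>i. k \<le> i \<longrightarrow> T i = T0 i \<and> H i = 0) \<and>
     (\<forall>i<k. \<forall>p. sim_sym (T i p) \<in> tm_gamma UNIV (Ms g)) \<and>
     (\<forall>i<k. H i \<le> t \<and> (\<exists>E. E \<le> max (e0 i) t \<and> written_upto (T i) (\<lambda>p. input_of (T0 i p)) E (H i))))"

lemma written_upto_write: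
  assumes d: "written_upto tp I E h"
    and c: "0 < h \<Longrightarrow> \<exists>s. c = Cell (I h) (Written s)" "h = 0 \<Longrightarrow> c = Marker" and h': "h' \<le> Suc h"
  shows "written_upto (tp(h := c)) I (max E h) h'"
  unfolding written_upto_def
proof (intro conjI allI impI)
  show "(tp(h := c)) 0 = Marker" using d c(2) by (cases "h = 0") (auto simp: written_upto_def)
next
  fix p :: nat assume "0 < p"
  then show "\<exists>v. (tp(h := c)) p = Cell (I p) v" using d c(1) by (cases "p = h") (auto simp: written_upto_def)
next
  fix p :: nat assume "0 < p"
  moreover have "h \<le> Suc E" using d by (simp add: written_upto_def)
  ultimately show "mark_of ((tp(h := c)) p) = Unwritten \<longleftrightarrow> max E h < p"
    using d c(1) by (cases "p = h") (auto simp: written_upto_def)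
next
  show "h' \<le> max E h + 1" using h' by simp
qed

lemma sim_action_ok_tm_delta:
  assumes g: "g \<in> S" and cq: "cq \<in> tm_states (Ms g) - tm_halt (Ms g)"
    and rl: "length rl = k" "set rl \<subseteq> tm_gamma UNIV (Ms g)"
  shows "sim_action_ok g rl (tm_delta (Ms g) cq rl)"
proof -
  have "\<forall>q \<in> tm_states (Ms g) - tm_halt (Ms g). \<forall>rs. length rs = k \<and> set rs \<subseteq> tm_gamma UNIV (Ms g) \<longrightarrow>
      (case tm_delta (Ms g) q rs of (q', ws, ms) \<Rightarrow>
         q' \<in> tm_states (Ms g) \<and> length ws = k \<and> length ms = k \<and>
         set ws \<subseteq> tm_gamma UNIV (Ms g) \<and> set ms \<subseteq> {-1, 0, 1} \<and>
         (\<forall>i<k. (ws ! i = Start \<longleftrightarrow> rs ! i = Start) \<and> (rs ! i = Start \<longrightarrow> ms ! i \<noteq> -1)))"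
    using wf_Ms[rule_format, OF g] unfolding wf_tm_def by (elim conjE) assumption
  from this[rule_format, OF cq] rl show ?thesis
    unfolding sim_action_ok_def by simp
qed

lemma written_upto_sim_write:
  assumes d: "written_upto tp I E h" and start: "w = Start \<longleftrightarrow> sim_sym (tp h) = Start" and m: "m \<in> {-1, 0, 1}"
  shows "sim_sym (case tp h of Cell J v \<Rightarrow> Cell J (Written w) | c \<Rightarrow> c) = w"
    and "written_upto (tp(h := case tp h of Cell J v \<Rightarrow> Cell J (Written w) | c \<Rightarrow> c)) I (max E h) (nat (int h + m))"
proof -
  let ?c = "case tp h of Cell J v \<Rightarrow> Cell J (Written w) | c \<Rightarrow> c"
  consider "h = 0" "tp h = Marker" | v where "0 < h" "tp h = Cell (I h) v"
    using written_upto_Marker_iff[OF d] written_upto_Cell[OF d] by blast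
  then have "sim_sym ?c = w \<and> (0 < h \<longrightarrow> (\<exists>s. ?c = Cell (I h) (Written s))) \<and> (h = 0 \<longrightarrow> ?c = Marker)"
    using start by cases auto
  moreover have "nat (int h + m) \<le> Suc h" using m by auto
  ultimately show "sim_sym ?c = w" and "written_upto (tp(h := ?c)) I (max E h) (nat (int h + m))"
    using written_upto_write[OF d, of ?c] by auto
qed

lemma step_Simulate:
  assumes "cq \<notin> tm_halt (Ms g)" and rl: "rl = map (\<lambda>i. sim_sym (T i (H i))) [0..<k]"
    and d: "tm_delta (Ms g) cq rl = (q', wl, ml)" and ok: "sim_action_ok g rl (q', wl, ml)"
  shows "step (Simulate g cq, T, H) = (Simulate g q',
    \<lambda>i. if i < k then (T i)(H i := case T i (H i) of Cell J v \<Rightarrow> Cell J (Written (wl ! i)) | c \<Rightarrow> c) else T i,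
    \<lambda>i. if i < k then nat (int (H i) + ml ! i) else H i)"
proof -
  have "map (\<lambda>i. sim_sym (scanned T H i)) [0..<k] = rl" unfolding rl by (simp add: scanned_def)
  then have "simulate_action g cq (scanned T H) = (Simulate g q',
      \<lambda>i. if i < k then (case scanned T H i of Cell J v \<Rightarrow> Cell J (Written (wl ! i)) | c \<Rightarrow> c) else scanned T H i,
      \<lambda>i. if i < k then ml ! i else 0)"
    unfolding simulate_action_def Let_def using d ok by simp
  then show ?thesis using assms(1) by (simp add: final_def fun_eq_iff scanned_def)
qed

lemma simulates_step:
  assumes g: "g \<in> S" and r: "simulates g T0 e0 t (q, T, H) (cq, ts, hs)" and running: "cq \<notin> tm_halt (Ms g)"
  shows "simulates g T0 e0 (Suc t) (step (q, T, H)) (tm_step (Ms g) (cq, ts, hs))"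
proof -
  have q: "q = Simulate g cq" and cq: "cq \<in> tm_states (Ms g)" and lengths: "length ts = k" "length hs = k"
    and ts: "\<And>i. i < k \<Longrightarrow> ts ! i = sim_sym \<circ> T i" and hs: "\<And>i. i < k \<Longrightarrow> hs ! i = H i"
    and beyond: "\<And>i. k \<le> i \<Longrightarrow> T i = T0 i \<and> H i = 0"
    and gamma: "\<And>i p. i < k \<Longrightarrow> sim_sym (T i p) \<in> tm_gamma UNIV (Ms g)"
    and heads: "\<And>i. i < k \<Longrightarrow> H i \<le> t"
    and written: "\<And>i. i < k \<Longrightarrow> \<exists>E. E \<le> max (e0 i) t \<and> written_upto (T i) (\<lambda>p. input_of (T0 i p)) E (H i)"
    using r unfolding simulates_def by auto
  define rl where "rl = map (\<lambda>i. sim_sym (T i (H i))) [0..<k]"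
  obtain q' wl ml where d: "tm_delta (Ms g) cq rl = (q', wl, ml)" by (metis prod_cases3)
  have "set rl \<subseteq> tm_gamma UNIV (Ms g)" using gamma by (auto simp: rl_def)
  then have ok: "sim_action_ok g rl (q', wl, ml)"
    using sim_action_ok_tm_delta[OF g _ _, of cq rl] cq running d by (simp add: rl_def)
  then have q': "q' \<in> tm_states (Ms g)" and lwl: "length wl = k" "length ml = k"
    and wl: "set wl \<subseteq> tm_gamma UNIV (Ms g)" and ml: "set ml \<subseteq> {-1, 0, 1}"
    and start: "\<And>i. i < k \<Longrightarrow> wl ! i = Start \<longleftrightarrow> rl ! i = Start"
    unfolding sim_action_ok_def by auto
  have wf: "tm_k (Ms g) = k" using wf_Ms g by (simp add: wf_tm_def)
  have "map (\<lambda>i. (ts ! i) (hs ! i)) [0..<k] = rl" by (auto simp: rl_def ts hs)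
  then have tm_step: "tm_step (Ms g) (cq, ts, hs) = (q', map (\<lambda>i. (ts ! i)(hs ! i := wl ! i)) [0..<k],
      map (\<lambda>i. nat (int (hs ! i) + ml ! i)) [0..<k])"
    using running d wf by (simp add: Let_def)
  define T' where "T' = (\<lambda>i. if i < k then (T i)(H i :=
    case T i (H i) of Cell J v \<Rightarrow> Cell J (Written (wl ! i)) | c \<Rightarrow> c) else T i)"
  define H' where "H' = (\<lambda>i. if i < k then nat (int (H i) + ml ! i) else H i)"
  have tape: "map (\<lambda>i. (ts ! i)(hs ! i := wl ! i)) [0..<k] ! i = sim_sym \<circ> T' i \<and>
      map (\<lambda>i. nat (int (hs ! i) + ml ! i)) [0..<k] ! i = H' i \<and>
      (\<forall>p. sim_sym (T' i p) \<in> tm_gamma UNIV (Ms g)) \<and> H' i \<le> Suc t \<and>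
      (\<exists>E. E \<le> max (e0 i) (Suc t) \<and> written_upto (T' i) (\<lambda>p. input_of (T0 i p)) E (H' i))"
    if i: "i < k" for i
  proof -
    have "wl ! i \<in> set wl" "ml ! i \<in> set ml" using i lwl by simp_all
    then have wli: "wl ! i \<in> tm_gamma UNIV (Ms g)" and mli: "ml ! i \<in> {-1, 0, 1}" using wl ml by blast+
    obtain E where E: "E \<le> max (e0 i) t" "written_upto (T i) (\<lambda>p. input_of (T0 i p)) E (H i)"
      using written[OF i] by blast
    have "wl ! i = Start \<longleftrightarrow> sim_sym (T i (H i)) = Start" using start[OF i] i by (simp add: rl_def)
    note sim_write = written_upto_sim_write[OF E(2) this mli]
    have "max E (H i) \<le> max (e0 i) (Suc t)"
      using E(1) heads[OF i] by (auto simp: max_def split: if_split_asm)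
    moreover have "written_upto (T' i) (\<lambda>p. input_of (T0 i p)) (max E (H i)) (H' i)"
      using sim_write(2) i by (simp add: T'_def H'_def)
    ultimately have "\<exists>E. E \<le> max (e0 i) (Suc t) \<and> written_upto (T' i) (\<lambda>p. input_of (T0 i p)) E (H' i)"
      by blast
    then show ?thesis
      using i sim_write(1) wli mli gamma[OF i] heads[OF i] by (auto simp: T'_def H'_def ts hs fun_eq_iff)
  qed
  show ?thesis
    unfolding step_Simulate[where T = T and H = H, OF running rl_def d ok, folded q T'_def H'_def] tm_step simulates_def
    using tape q' lengths beyond by (auto simp: T'_def H'_def)
qed

lemma simulates_run:
  assumes g: "g \<in> S" and r0: "simulates g T0 e0 0 A0 C0"
  shows "(\<forall>t'<t. fst (tm_run (Ms g) C0 t') \<notin> tm_halt (Ms g)) \<Longrightarrow>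
     simulates g T0 e0 t (run t A0) (tm_run (Ms g) C0 t)"
proof (induction t)
  case 0
  then show ?case using r0 by (simp add: tm_run_def)
next
  case (Suc t)
  obtain q T H where a: "run t A0 = (q, T, H)" by (metis prod_cases3)
  obtain cq ts hs where c: "tm_run (Ms g) C0 t = (cq, ts, hs)" by (metis prod_cases3)
  have "simulates g T0 e0 t (q, T, H) (cq, ts, hs)" using Suc a c by simp
  moreover have "cq \<notin> tm_halt (Ms g)" using Suc.prems c by (metis fst_conv lessI)
  ultimately show ?case using simulates_step[OF g] a c by (simp add: run_Suc' tm_run_Suc)
qed

lemma simulates_init:
  assumes g: "g \<in> S"
  shows "simulates g (tapes gs m w) (\<lambda>i. if i = 0 then length w else 0) 0
     (Simulate g (tm_start (Ms g)), tapes gs m w, \<lambda>i. 0) (tm_init (Ms g) w)"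
proof -
  have k: "tm_k (Ms g) = k" and start: "tm_start (Ms g) \<in> tm_states (Ms g)"
    using wf_Ms g by (auto simp: wf_tm_def)
  define ts where "ts = (\<lambda>p. if p = 0 then Start else if p \<le> length w then Sym (w ! (p - 1)) else Blank)
    # replicate (k - 1) (\<lambda>p. if p = 0 then Start else (Blank :: 'a tsym))"
  have "tm_init (Ms g) w = (tm_start (Ms g), ts, replicate k 0)"
    by (simp add: tm_init_def k ts_def)
  moreover have "length ts = k" using k_pos by (simp add: ts_def)
  moreover have "ts ! i = sim_sym \<circ> tapes gs m w i" if "i < k" for i
    using that by (cases i) (auto simp: ts_def fun_eq_iff tapes_def main_tape_def blank_tape_def)
  moreover have "sim_sym (tapes gs m w i p) \<in> tm_gamma UNIV (Ms g)" for i p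
    by (auto simp: tapes_def main_tape_def blank_tape_def tm_gamma_def)
  moreover have "\<exists>E. E \<le> max (if i = 0 then length w else 0) 0 \<and>
      written_upto (tapes gs m w i) (\<lambda>p. input_of (tapes gs m w i p)) E 0" for i
    by (rule exI[of _ "if i = 0 then length w else 0"])
      (auto simp: written_upto_def tapes_def main_tape_def blank_tape_def)
  ultimately show ?thesis
    using start k_pos unfolding simulates_def by simp
qed

lemma simulation_phase:
  assumes g: "g \<in> S" and computes: "tm_outputs_within (Ms g) w y B"
  shows "\<exists>t1 T H. real t1 \<le> B \<and> run (Suc t1) (Simulate g (tm_start (Ms g)), tapes gs m w, \<lambda>i. 0) = (Rewind_Clean 0, T, H) \<and>
     (\<forall>i<k. H i \<le> t1 \<and> (\<exists>E. E \<le> max (if i = 0 then length w else 0) t1 \<and>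
          written_upto (T i) (\<lambda>p. input_of (tapes gs m w i p)) E (H i))) \<and>
     tape_has_output (sim_sym \<circ> T 0) y \<and> (\<forall>i. k \<le> i \<longrightarrow> T i = tapes gs m w i \<and> H i = 0)"
proof -
  let ?C0 = "tm_init (Ms g) w" and ?A0 = "(Simulate g (tm_start (Ms g)), tapes gs m w, \<lambda>i. 0 :: nat)"
  have "tm_accept (Ms g) \<subseteq> tm_halt (Ms g)" using wf_Ms g by (simp add: wf_tm_def)
  from tm_outputs_within_first_halt[OF this computes] obtain t1 where t1: "real t1 \<le> B"
    and halt: "fst (tm_run (Ms g) ?C0 t1) \<in> tm_halt (Ms g)"
    and before: "\<forall>t'<t1. fst (tm_run (Ms g) ?C0 t') \<notin> tm_halt (Ms g)"
    and out: "tape_has_output (hd (fst (snd (tm_run (Ms g) ?C0 t1)))) y"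
    by blast
  obtain q T H where A: "run t1 ?A0 = (q, T, H)" by (metis prod_cases3)
  obtain cq ts hs where C: "tm_run (Ms g) ?C0 t1 = (cq, ts, hs)" by (metis prod_cases3)
  have "simulates g (tapes gs m w) (\<lambda>i. if i = 0 then length w else 0) t1 (q, T, H) (cq, ts, hs)"
    using simulates_run[OF g simulates_init[OF g, of gs m] before] A C by simp
  then have q: "q = Simulate g cq" and ts: "length ts = k" "ts ! 0 = sim_sym \<circ> T 0"
    and inv: "(\<forall>i<k. H i \<le> t1 \<and> (\<exists>E. E \<le> max (if i = 0 then length w else 0) t1 \<and>
          written_upto (T i) (\<lambda>p. input_of (tapes gs m w i p)) E (H i))) \<and>
        (\<forall>i. k \<le> i \<longrightarrow> T i = tapes gs m w i \<and> H i = 0)"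
    using k_pos unfolding simulates_def by auto
  have "step (q, T, H) = (Rewind_Clean 0, T, H)"
    by (rule step_set_state) (use q halt C in auto)
  then have "run (Suc t1) ?A0 = (Rewind_Clean 0, T, H)"
    using A by (simp add: run_Suc')
  moreover have "tape_has_output (sim_sym \<circ> T 0) y"
    using out C ts k_pos by (cases ts) auto
  ultimately show ?thesis using t1 inv by blast
qed

lemma round:
  assumes m: "m < length gs" and g: "gs ! m \<in> S" and computes: "tm_outputs_within (Ms (gs ! m)) w y B"
  shows "\<exists>t t1. real t1 \<le> B \<and> t \<le> 2 * m + 4 + Suc t1 + k * (t1 + 2 * (length w + t1) + 6) \<and>
    run t (Scan, tapes gs m w, \<lambda>i. 0) = (Scan, tapes gs (Suc m) y, \<lambda>i. 0)"
proof -
  let ?T = "tapes gs (Suc m) w" and ?q = "Simulate (gs ! m) (tm_start (Ms (gs ! m)))"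
  define I where "I = (\<lambda>p. input_of (?T 0 p))"
  obtain t1 T H where t1: "real t1 \<le> B"
    and simulate: "run (Suc t1) (?q, ?T, \<lambda>i. 0) = (Rewind_Clean 0, T, H)"
    and written: "\<forall>i<k. H i \<le> t1 \<and> (\<exists>E. E \<le> max (if i = 0 then length w else 0) t1 \<and>
      written_upto (T i) (\<lambda>p. input_of (?T i p)) E (H i))"
    and out: "tape_has_output (sim_sym \<circ> T 0) y"
    and beyond: "\<forall>i. k \<le> i \<longrightarrow> T i = ?T i \<and> H i = 0"
    using simulation_phase[OF g computes, of gs "Suc m"] by blast
  obtain E0 where E0: "E0 \<le> max (length w) t1" "written_upto (T 0) I E0 (H 0)" "H 0 \<le> t1"
    using written k_pos unfolding I_def by fastforce
  have aux: "\<forall>j. 0 < j \<and> j < k \<longrightarrow>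
      (\<exists>E. written_upto (T j) (\<lambda>_. No_Input) E (H j) \<and> E \<le> length w + t1 \<and> H j \<le> t1)"
  proof (intro allI impI)
    fix j assume j: "0 < j \<and> j < k"
    then obtain E where "E \<le> max 0 t1" "written_upto (T j) (\<lambda>p. input_of (?T j p)) E (H j)" "H j \<le> t1"
      using written by auto
    moreover have "(\<lambda>p. input_of (?T j p)) = (\<lambda>_. No_Input)"
      using j by (auto simp: fun_eq_iff tapes_def blank_tape_def)
    ultimately show "\<exists>E. written_upto (T j) (\<lambda>_. No_Input) E (H j) \<and> E \<le> length w + t1 \<and> H j \<le> t1"
      by auto
  qed
  have "E0 \<le> length w + t1" using E0(1) by simp
  from clean_phase[where T = T and H = H, OF E0(2) this E0(3) out aux]
  obtain t2 where t2: "t2 \<le> k * (t1 + 2 * (length w + t1) + 6)"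
    and clean: "run t2 (Rewind_Clean 0, T, H) = (Scan, \<lambda>j. if j = 0 then (\<lambda>p. if p = 0 then Marker
        else Cell (I p) (if p \<le> length y then Written (Sym (y ! (p - 1))) else Unwritten))
      else if j < k then blank_tape else T j, \<lambda>j. if j < k then 0 else H j)"
    by blast
  have "(\<lambda>j. if j = 0 then (\<lambda>p. if p = 0 then Marker
        else Cell (I p) (if p \<le> length y then Written (Sym (y ! (p - 1))) else Unwritten))
      else if j < k then blank_tape else T j) = tapes gs (Suc m) y"
    using beyond k_pos by (auto simp: fun_eq_iff I_def tapes_def main_tape_def)
  moreover have "(\<lambda>j. if j < k then 0 else H j) = (\<lambda>i. 0)" using beyond by (auto simp: fun_eq_iff)
  ultimately have "run (2 * m + 4 + Suc t1 + t2) (Scan, tapes gs m w, \<lambda>i. 0) = (Scan, tapes gs (Suc m) y, \<lambda>i. 0)"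
    using run_seq[OF run_seq[OF scan_phase[OF m] simulate] clean] by simp
  then show ?thesis using t1 t2 by (intro exI[of _ "2 * m + 4 + Suc t1 + t2"] exI[of _ t1]) simp
qed

lemma run_chain:
  assumes "\<forall>i<n. \<exists>t \<le> b. run t (X i) = X (Suc i)"
  shows "j \<le> n \<Longrightarrow> \<exists>t \<le> j * b. run t (X 0) = X j"
proof (induction j)
  case 0 then show ?case by (intro exI[of _ 0]) simp
next
  case (Suc j)
  obtain t where t: "t \<le> j * b" "run t (X 0) = X j" using Suc by auto
  have "j < n" using Suc.prems by simp
  then obtain t' where t': "t' \<le> b" "run t' (X j) = X (Suc j)" using assms by blast
  have "run (t + t') (X 0) = X (Suc j)" by (simp add: run_add t(2) t'(2))
  moreover have "t + t' \<le> Suc j * b" using t(1) t'(1) by simp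
  ultimately show ?case by blast
qed

lemma round_within:
  assumes Ms: "\<forall>s\<in>S. \<forall>x. tm_outputs_within (Ms s) x (fs s x) (real D * (real (length x) + 1))"
    and gs: "set gs \<subseteq> S" and i: "i < length gs"
    and len: "length (fold fs (take i gs) w0) + 1 \<le> P * (length gs + 1)"
  shows "\<exists>t \<le> (length gs + 1) * (5 + D * P + k * (3 * D * P + 2 * P + 6)).
    run t (Scan, tapes gs i (fold fs (take i gs) w0), \<lambda>_. 0) =
      (Scan, tapes gs (Suc i) (fold fs (take (Suc i) gs) w0), \<lambda>_. 0)"
proof -
  let ?w = "fold fs (take i gs) w0"
  have g: "gs ! i \<in> S" using gs i by (auto dest: nth_mem)
  have "tm_outputs_within (Ms (gs ! i)) ?w (fold fs (take (Suc i) gs) w0) (D * (real (length ?w) + 1))"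
    using Ms g i by (simp add: fold_take_Suc)
  from round[OF i g this] obtain t t1 where
    t1: "real t1 \<le> D * (real (length ?w) + 1)"
    and t: "t \<le> 2 * i + 4 + Suc t1 + k * (t1 + 2 * (length ?w + t1) + 6)"
    and r: "run t (Scan, tapes gs i ?w, \<lambda>_. 0) = (Scan, tapes gs (Suc i) (fold fs (take (Suc i) gs) w0), \<lambda>_. 0)"
    by blast
  have "real t1 \<le> real (D * (length ?w + 1))" using t1 by (simp add: algebra_simps)
  then have "t1 \<le> D * (length ?w + 1)" by (simp only: of_nat_le_iff)
  with r show ?thesis using round_time_bound[OF i len _ t] by blast
qed

theorem machine_computes_fold:
  assumes qe: "inj_on qe states" and fc: "inj_on fc cells"
    and Ms: "\<forall>s\<in>S. \<forall>x. tm_outputs_within (Ms s) x (fs s x) (real D * (real (length x) + 1))"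
  shows "\<exists>C>0. \<forall>gs. set gs \<subseteq> S \<longrightarrow> (\<forall>j\<le>length gs. length (fold fs (take j gs) w0) \<le> Q * (j + 1)) \<longrightarrow>
    tm_outputs_within (machine qe fc) (map Inr gs) (map Inl (fold fs gs w0)) (C * (real (length gs) + 1)\<^sup>2)"
proof (intro exI conjI allI impI)
  define A where "A = 5 + D * (Q + 1) + k * (3 * D * (Q + 1) + 2 * (Q + 1) + 6)"
  show "real (2 * length w0 + 12 + A + Q) > 0" by simp
  fix gs assume gs: "set gs \<subseteq> S" and len: "\<forall>j\<le>length gs. length (fold fs (take j gs) w0) \<le> Q * (j + 1)"
  define n where "n = length gs"
  define X where "X = (\<lambda>i. (Scan :: 'g control, tapes gs i (fold fs (take i gs) w0), \<lambda>_::nat. 0::nat))"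
  have "\<forall>i<n. \<exists>t \<le> (n + 1) * A. run t (X i) = X (Suc i)"
  proof (intro allI impI)
    fix i assume i: "i < n"
    have "length (fold fs (take i gs) w0) \<le> Q * (n + 1)"
      using len[rule_format, of i] i mult_le_mono2[of "i + 1" "n + 1" Q] unfolding n_def by linarith
    then have "length (fold fs (take i gs) w0) + 1 \<le> (Q + 1) * (length gs + 1)"
      unfolding n_def by simp
    from round_within[OF Ms gs i[unfolded n_def] this]
    show "\<exists>t \<le> (n + 1) * A. run t (X i) = X (Suc i)"
      unfolding X_def A_def n_def .
  qed
  then obtain tr where tr: "tr \<le> n * ((n + 1) * A)" "run tr (X 0) = X n"
    using run_chain[of n] by blast
  have X0: "X 0 = (Scan, tapes gs 0 w0, \<lambda>_. 0)" and Xn: "X n = (Scan, tapes gs n (fold fs gs w0), \<lambda>_. 0)"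
    by (simp_all add: X_def n_def)
  obtain T H where out: "run (2 * n + length (fold fs gs w0) + 6) (X n) = (Accept, T, H)"
    "tape_has_output (encode_cell fc \<circ> T 0) (map Inl (fold fs gs w0))"
    using output_phase[OF n_def, of "fold fs gs w0" fc] unfolding Xn by blast
  have "run ((2 * length w0 + 4) + tr + (2 * n + length (fold fs gs w0) + 6)) (Load 0, tapes gs 0 [], \<lambda>_. 0)
      = (Accept, T, H)"
    by (simp only: run_add[of "2 * length w0 + 4 + tr"] run_add[of "2 * length w0 + 4" tr] load_phase
        flip: X0) (simp only: tr(2) out(1))
  moreover have "length (fold fs gs w0) \<le> Q * (n + 1)"
    using len n_def by (metis order_refl take_all)
  then have "(2 * length w0 + 4) + tr + (2 * n + length (fold fs gs w0) + 6)
      \<le> (2 * length w0 + 12 + A + Q) * (n + 1)\<^sup>2"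
    by (rule total_time_bound[OF tr(1)])
  then have "real ((2 * length w0 + 4) + tr + (2 * n + length (fold fs gs w0) + 6))
      \<le> real ((2 * length w0 + 12 + A + Q) * (n + 1)\<^sup>2)"
    by (simp only: of_nat_le_iff)
  then have "real ((2 * length w0 + 4) + tr + (2 * n + length (fold fs gs w0) + 6))
      \<le> real (2 * length w0 + 12 + A + Q) * (real (length gs) + 1)\<^sup>2"
    by (simp add: n_def add.commute[of 1 "real (length gs)"])
  ultimately show "tm_outputs_within (machine qe fc) (map Inr gs) (map Inl (fold fs gs w0))
      (real (2 * length w0 + 12 + A + Q) * (real (length gs) + 1)\<^sup>2)"
    using tm_outputs_within_machine[OF qe fc gs] out(2) by blast
qed


theorem computes_fold_in_quadratic_time:
  assumes Ms: "\<forall>s\<in>S. \<forall>x. tm_outputs_within (Ms s) x (fs s x) (real D * (real (length x) + 1))"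
    and len: "\<forall>gs. set gs \<subseteq> S \<longrightarrow> (\<forall>j\<le>length gs. length (fold fs (take j gs) w0) \<le> Q * (j + 1))"
  obtains M :: "('a + 'g) tm" and C :: real where "wf_tm k alphabet M" and "C > 0"
    and "\<forall>gs. set gs \<subseteq> S \<longrightarrow>
      tm_outputs_within M (map Inr gs) (map Inl (fold fs gs w0)) (C * (real (length gs) + 1)\<^sup>2)"
proof -
  obtain qe :: "'g control \<Rightarrow> nat" where qe: "inj_on qe states"
    using finite_imp_inj_to_nat_seg[OF finite_states] by blast
  obtain fc :: "('a, 'g) cell \<Rightarrow> nat" where fc: "inj_on fc cells"
    using finite_imp_inj_to_nat_seg[OF finite_cells] by blast
  obtain C where "C > 0" and "\<forall>gs. set gs \<subseteq> S \<longrightarrow>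
      (\<forall>j\<le>length gs. length (fold fs (take j gs) w0) \<le> Q * (j + 1)) \<longrightarrow>
      tm_outputs_within (machine qe fc) (map Inr gs) (map Inl (fold fs gs w0)) (C * (real (length gs) + 1)\<^sup>2)"
    using machine_computes_fold[OF qe fc Ms] by blast
  with that[OF wf_tm_machine[OF qe fc]] len show ?thesis by blast
qed
end

theorem theorem1p6:
  fixes G :: "('g, 'm) monoid_scheme" (structure)
    and S :: "'g set"
    and L :: "'a::finite list set"
    and psi :: "'a list \<Rightarrow> 'g"
    and k :: nat
  assumes k: "k > 1"
    and grp: "group G"
    and finS: "finite S"
    and gen: "semigroup_generates G S"
    and bij: "bij_betw psi L (carrier G)"
    and lin: "\<forall>s \<in> S. \<exists>f. linear_time_computable k f \<and>
                 (\<forall>w \<in> L. f w \<in> L \<and> psi (f w) = psi w \<otimes> s)"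
    and qgeo: "\<exists>C > 0. \<forall>w \<in> L. real (length w) \<le> C * (real (word_length G S (psi w)) + 1)"
  shows "\<exists>(M :: ('a + 'g) tm) C. wf_tm k (Inl ` UNIV \<union> Inr ` S) M \<and> C > 0 \<and>
           (\<forall>gs. set gs \<subseteq> S \<longrightarrow>
              (\<exists>w \<in> L. psi w = word_prod G gs \<and>
                 tm_outputs_within M (map Inr gs) (map Inl w)
                   (C * (real (length gs) + 1) ^ 2)))"
proof -
  interpret group G by (fact grp)
  obtain fs where fs: "\<forall>s\<in>S. linear_time_computable k (fs s)"
    and step: "\<forall>s\<in>S. \<forall>w\<in>L. fs s w \<in> L \<and> psi (fs s w) = psi w \<otimes> s"
    using bchoice[OF lin] by blast
  obtain Ms and D :: nat where Ms: "\<forall>s\<in>S. wf_tm k UNIV (Ms s)"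
    and D: "\<forall>s\<in>S. \<forall>x. tm_outputs_within (Ms s) x (fs s x) (D * (real (length x) + 1))"
    using linear_time_machines[OF finS fs] by blast
  have psi: "psi ` L \<subseteq> carrier G" and S: "S \<subseteq> carrier G"
    using bij gen by (auto simp: bij_betw_def semigroup_generates_def)
  obtain w0 where w0: "w0 \<in> L" "psi w0 = \<one>"
    using bij one_closed unfolding bij_betw_def by (metis imageE)
  obtain Cq where Cq: "\<forall>w\<in>L. real (length w) \<le> Cq * (real (word_length G S (psi w)) + 1)" "0 \<le> Cq"
    using qgeo by (auto intro: less_imp_le)
  interpret sequential_sim k S Ms w0
    using k finS Ms by unfold_locales auto
  obtain M C where M: "wf_tm k alphabet M" and C: "C > 0" and out: "\<forall>gs. set gs \<subseteq> S \<longrightarrow>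
      tm_outputs_within M (map Inr gs) (map Inl (fold fs gs w0)) (C * (real (length gs) + 1)\<^sup>2)"
    using computes_fold_in_quadratic_time[OF D] fold_length_le[OF psi S step w0 Cq] by metis
  show ?thesis
  proof (intro exI conjI allI impI)
    fix gs assume gs: "set gs \<subseteq> S"
    show "\<exists>w\<in>L. psi w = word_prod G gs \<and>
        tm_outputs_within M (map Inr gs) (map Inl w) (C * (real (length gs) + 1) ^ 2)"
      using fold_from_unit[OF psi S step w0 gs] out gs by blast
  qed (use M C in \<open>simp_all add: alphabet_def\<close>)
qed

end
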